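(* There exists a real-time 1-blind-counter Büchi automaton $\mathcal{A}_1$ such that the $\omega$-language $\mathrm{L}(\mathcal{A}_1)$ is $\mathbf{\Sigma}^1_1$-complete, hence non-Borel.
   Context: A real-time 1-blind-counter Büchi automaton is a finite-state automaton $(K,\Sigma,\Delta,q_0,F)$ reading one letter per step, whose transitions add $-1$, $0$ or $+1$ to one non-negative integer counter (a run blocks if the counter would become negative) but can never test whether the counter is zero; runs start in $q_0$ with counter $0$, and an $\omega$-word is accepted if some run visits $F$ infinitely often. A set $F\subseteq\Sigma^\omega$ (Cantor topology) is $\mathbf{\Sigma}^1_1$-complete if for every finite $Y$ and $E\subseteq Y^\omega$: $E$ is analytic iff $E=f^{-1}(F)$ for some continuous $f$. *)

theory Defs
  imports "HOL-Analysis.Analysis"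
begin

definition cantor_top :: "nat set \<Rightarrow> (nat \<Rightarrow> nat) topology" where
  "cantor_top Y = product_topology (\<lambda>_. discrete_topology Y) UNIV"

definition baire_top :: "(nat \<Rightarrow> nat) topology" where
  "baire_top = product_topology (\<lambda>_. discrete_topology UNIV) UNIV"

definition analytic_set :: "nat set \<Rightarrow> (nat \<Rightarrow> nat) set \<Rightarrow> bool" where
  "analytic_set Y E \<longleftrightarrow>
     (\<exists>C. closedin (prod_topology (cantor_top Y) baire_top) C \<and> E = fst ` C)"

definition borel_in :: "'a topology \<Rightarrow> 'a set \<Rightarrow> bool" where
  "borel_in X B \<longleftrightarrow> B \<in> sigma_sets (topspace X) {U. openin X U}"

definition sigma11_complete :: "nat set \<Rightarrow> (nat \<Rightarrow> nat) set \<Rightarrow> bool" where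
  "sigma11_complete \<Sigma> F \<longleftrightarrow>
     F \<subseteq> topspace (cantor_top \<Sigma>) \<and>
     (\<forall>Y E. finite Y \<longrightarrow> E \<subseteq> topspace (cantor_top Y) \<longrightarrow>
        (analytic_set Y E \<longleftrightarrow>
          (\<exists>f. continuous_map (cantor_top Y) (cantor_top \<Sigma>) f \<and>
               E = {y \<in> topspace (cantor_top Y). f y \<in> F})))"

text \<open>A transition (p, a, d, q) reads letter a, goes from p to q and
  adds d \<in> {-1,0,1} to the counter.\<close>
record bcba =
  states :: "nat set"
  alph   :: "nat set"
  trans  :: "(nat \<times> nat \<times> int \<times> nat) set"
  init   :: nat
  final  :: "nat set"

definition wf_bcba :: "bcba \<Rightarrow> bool" where
  "wf_bcba A \<longleftrightarrow> finite (states A) \<and> finite (alph A) \<and> init A \<in> states A \<and>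
     final A \<subseteq> states A \<and>
     trans A \<subseteq> states A \<times> alph A \<times> {-1, 0, 1} \<times> states A"

text \<open>A run on x: state sequence q and (non-negative) counter sequence c; the counter is
  natural-valued, so a run blocks when it would become negative. No zero tests.\<close>
definition is_run :: "bcba \<Rightarrow> (nat \<Rightarrow> nat) \<Rightarrow> (nat \<Rightarrow> nat) \<Rightarrow> (nat \<Rightarrow> nat) \<Rightarrow> bool" where
  "is_run A x q c \<longleftrightarrow> q 0 = init A \<and> c 0 = 0 \<and>
     (\<forall>i. \<exists>d. (q i, x i, d, q (Suc i)) \<in> trans A \<and> int (c (Suc i)) = int (c i) + d)"

definition omega_lang :: "bcba \<Rightarrow> (nat \<Rightarrow> nat) set" where
  "omega_lang A = {x. (\<forall>n. x n \<in> alph A) \<and>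
     (\<exists>q c. is_run A x q c \<and> infinite {i. q i \<in> final A})}"

end

theory Submission
  imports Defs
begin

text \<open>An analytic set E is the projection of a closed set C in Y^omega x omega^omega, so y is in E
  iff the tree of finite approximations of the section of C at y has an infinite branch, and this
  tree depends continuously on y. A tree T is turned into an omega-word in stages: stage k lists
  the sequences of length at most k with entries below k in decreasing Kleene-Brouwer order, each
  in a cell made of a block of zeros and two heads, offering to keep the node guessed at stage
  k - 1 or to extend it by one entry, each followed by a pointer of ones. The automaton counts
  the zeros, guesses one head per stage and counts down along its pointer. Since the blind
  counter has to stay non-negative, every guess lies Kleene-Brouwer below the previous one, and
  the final state is visited at every extension. A run following an infinite branch of T is
  accepting; conversely, the guesses of an accepting run descend in the Kleene-Brouwer order and
  grow infinitely often, hence converge to an infinite branch of T. The language is analytic, as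
  every Buechi language is, and by Lusin's diagonal argument no Sigma^1_1-complete set is Borel.\<close>

section \<open>Cantor space\<close>

lemma topspace_cantor_top [simp]: "topspace (cantor_top S) = {x. \<forall>n. x n \<in> S}"
  by (auto simp: cantor_top_def PiE_def Pi_def)

lemma baire_top_eq: "baire_top = cantor_top UNIV"
  by (simp add: baire_top_def cantor_top_def)

definition agree :: "nat \<Rightarrow> (nat \<Rightarrow> 'a) \<Rightarrow> (nat \<Rightarrow> 'a) \<Rightarrow> bool" where
  "agree n x y \<longleftrightarrow> (\<forall>i<n. x i = y i)"

lemma agree_mono: "agree n x y \<Longrightarrow> m \<le> n \<Longrightarrow> agree m x y"
  by (auto simp: agree_def)

lemma agree_iff_map_eq: "agree n x y \<longleftrightarrow> map x [0..<n] = map y [0..<n]"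
  by (auto simp: agree_def)

definition cylinder :: "nat set \<Rightarrow> nat \<Rightarrow> (nat \<Rightarrow> nat) \<Rightarrow> (nat \<Rightarrow> nat) set" where
  "cylinder S n y = {x \<in> topspace (cantor_top S). agree n x y}"

lemma self_in_cylinder: "y \<in> topspace (cantor_top S) \<Longrightarrow> y \<in> cylinder S n y"
  by (simp add: cylinder_def agree_def)

lemma openin_cylinder: "openin (cantor_top S) (cylinder S n y)"
proof -
  define X where "X = (\<lambda>i. if i < n then {y i} \<inter> S else S)"
  have "openin (cantor_top S) (\<Pi>\<^sub>E i\<in>UNIV. X i)"
    unfolding cantor_top_def by (rule product_topology_basis) (auto simp: X_def)
  moreover have "(\<Pi>\<^sub>E i\<in>UNIV. X i) = cylinder S n y"
    by (auto simp: X_def cylinder_def agree_def PiE_def Pi_def split: if_splits)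
  ultimately show ?thesis by simp
qed

lemma openin_cantor_top_contains_cylinder:
  assumes "openin (cantor_top S) U" "x \<in> U"
  obtains n where "cylinder S n x \<subseteq> U"
proof -
  obtain X where X: "x \<in> (\<Pi>\<^sub>E i\<in>UNIV. X i)" "finite {i. X i \<noteq> S}" "(\<Pi>\<^sub>E i\<in>UNIV. X i) \<subseteq> U"
    using product_topology_open_contains_basis[OF assms[unfolded cantor_top_def]] by auto
  obtain n where n: "\<And>i. X i \<noteq> S \<Longrightarrow> i < n"
    using X(2) finite_nat_set_iff_bounded by auto
  have "cylinder S n x \<subseteq> (\<Pi>\<^sub>E i\<in>UNIV. X i)"
    using X(1) n by (force simp: cylinder_def agree_def PiE_iff)
  with X(3) show ?thesis using that by blast
qed

lemma openin_cantor_top_iff: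
  "openin (cantor_top S) U \<longleftrightarrow> U \<subseteq> topspace (cantor_top S) \<and> (\<forall>x\<in>U. \<exists>n. cylinder S n x \<subseteq> U)"
proof
  assume U: "openin (cantor_top S) U"
  show "U \<subseteq> topspace (cantor_top S) \<and> (\<forall>x\<in>U. \<exists>n. cylinder S n x \<subseteq> U)"
    using openin_subset[OF U] openin_cantor_top_contains_cylinder[OF U] by blast
next
  assume U: "U \<subseteq> topspace (cantor_top S) \<and> (\<forall>x\<in>U. \<exists>n. cylinder S n x \<subseteq> U)"
  show "openin (cantor_top S) U"
  proof (subst openin_subopen, intro ballI)
    fix x
    assume "x \<in> U"
    then obtain n where "cylinder S n x \<subseteq> U"
      using U by blast
    moreover have "x \<in> cylinder S n x"
      using \<open>x \<in> U\<close> U by (intro self_in_cylinder) blast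
    ultimately show "\<exists>T. openin (cantor_top S) T \<and> x \<in> T \<and> T \<subseteq> U"
      using openin_cylinder by blast
  qed
qed

lemma closedin_cantor_prod_limit:
  assumes C: "closedin (prod_topology (cantor_top S) (cantor_top S')) C"
    and y: "y \<in> topspace (cantor_top S)" and z: "z \<in> topspace (cantor_top S')"
    and approx: "\<And>n. \<exists>y' z'. (y', z') \<in> C \<and> agree n y' y \<and> agree n z' z"
  shows "(y, z) \<in> C"
proof (rule ccontr)
  assume "(y, z) \<notin> C"
  then have "(y, z) \<in> topspace (cantor_top S) \<times> topspace (cantor_top S') - C"
    using y z by simp
  moreover have "openin (prod_topology (cantor_top S) (cantor_top S'))
      (topspace (cantor_top S) \<times> topspace (cantor_top S') - C)"
    using C by (simp add: closedin_def)
  ultimately obtain U V where UV: "openin (cantor_top S) U" "openin (cantor_top S') V"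
      "y \<in> U" "z \<in> V" "U \<times> V \<subseteq> topspace (cantor_top S) \<times> topspace (cantor_top S') - C"
    unfolding openin_prod_topology_alt by (elim allE impE) auto
  obtain n1 where n1: "cylinder S n1 y \<subseteq> U"
    using openin_cantor_top_contains_cylinder[OF UV(1,3)] .
  obtain n2 where n2: "cylinder S' n2 z \<subseteq> V"
    using openin_cantor_top_contains_cylinder[OF UV(2,4)] .
  obtain y' z' where yz': "(y', z') \<in> C" "agree (max n1 n2) y' y" "agree (max n1 n2) z' z"
    using approx by blast
  have "y' \<in> cylinder S n1 y" "z' \<in> cylinder S' n2 z"
    using yz' closedin_subset[OF C] agree_mono[OF yz'(2) max.cobounded1]
      agree_mono[OF yz'(3) max.cobounded2]
    by (auto simp: cylinder_def)
  then have "(y', z') \<in> U \<times> V"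
    using n1 n2 by blast
  with UV(5) yz'(1) show False
    by blast
qed

lemma closedin_cantor_prodI:
  assumes sub: "C \<subseteq> topspace (cantor_top S) \<times> topspace (cantor_top S')"
    and limit: "\<And>y z. y \<in> topspace (cantor_top S) \<Longrightarrow> z \<in> topspace (cantor_top S') \<Longrightarrow>
       (\<forall>n. \<exists>y' z'. (y', z') \<in> C \<and> agree n y' y \<and> agree n z' z) \<Longrightarrow> (y, z) \<in> C"
  shows "closedin (prod_topology (cantor_top S) (cantor_top S')) C"
  unfolding closedin_def openin_prod_topology_alt
proof (intro conjI allI impI)
  show "C \<subseteq> topspace (prod_topology (cantor_top S) (cantor_top S'))"
    using sub by simp
  fix y z
  assume "(y, z) \<in> topspace (prod_topology (cantor_top S) (cantor_top S')) - C"
  then have y: "y \<in> topspace (cantor_top S)" and z: "z \<in> topspace (cantor_top S')"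
    and "(y, z) \<notin> C"
    by auto
  then obtain n where n: "\<not> (\<exists>y' z'. (y', z') \<in> C \<and> agree n y' y \<and> agree n z' z)"
    using limit by blast
  have "cylinder S n y \<times> cylinder S' n z \<subseteq>
      topspace (prod_topology (cantor_top S) (cantor_top S')) - C"
    using n by (auto simp: cylinder_def)
  then show "\<exists>U V. openin (cantor_top S) U \<and> openin (cantor_top S') V \<and> y \<in> U \<and> z \<in> V \<and>
      U \<times> V \<subseteq> topspace (prod_topology (cantor_top S) (cantor_top S')) - C"
    using openin_cylinder self_in_cylinder[OF y] self_in_cylinder[OF z]
    by (intro exI[of _ "cylinder S n y"] exI[of _ "cylinder S' n z"]) simp
qed

lemma closedin_cantor_baire_iff:
  "closedin (prod_topology (cantor_top S) baire_top) C \<longleftrightarrow>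
    C \<subseteq> topspace (cantor_top S) \<times> UNIV \<and>
    (\<forall>y z. y \<in> topspace (cantor_top S) \<longrightarrow>
       (\<forall>n. \<exists>y' z'. (y', z') \<in> C \<and> agree n y' y \<and> agree n z' z) \<longrightarrow> (y, z) \<in> C)"
  unfolding baire_top_eq
proof (intro iffI conjI allI impI)
  assume C: "closedin (prod_topology (cantor_top S) (cantor_top UNIV)) C"
  show "C \<subseteq> topspace (cantor_top S) \<times> UNIV"
    using closedin_subset[OF C] by simp
  fix y z
  assume "y \<in> topspace (cantor_top S)" "\<forall>n. \<exists>y' z'. (y', z') \<in> C \<and> agree n y' y \<and> agree n z' z"
  then show "(y, z) \<in> C"
    using closedin_cantor_prod_limit[OF C] by simp
next
  assume "C \<subseteq> topspace (cantor_top S) \<times> UNIV \<and>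
    (\<forall>y z. y \<in> topspace (cantor_top S) \<longrightarrow>
       (\<forall>n. \<exists>y' z'. (y', z') \<in> C \<and> agree n y' y \<and> agree n z' z) \<longrightarrow> (y, z) \<in> C)"
  then show "closedin (prod_topology (cantor_top S) (cantor_top UNIV)) C"
    by (intro closedin_cantor_prodI) auto
qed

lemma continuous_map_cantor_topI:
  assumes "\<And>x n. x \<in> topspace (cantor_top S) \<Longrightarrow> f x n \<in> S'"
    and "\<And>x n. x \<in> topspace (cantor_top S) \<Longrightarrow> \<exists>m. \<forall>x'\<in>cylinder S m x. f x' n = f x n"
  shows "continuous_map (cantor_top S) (cantor_top S') f"
  unfolding cantor_top_def[of S'] continuous_map_componentwise_UNIV
proof
  fix k
  show "continuous_map (cantor_top S) (discrete_topology S') (\<lambda>x. f x k)"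
    unfolding continuous_map_def
  proof (intro conjI allI impI)
    show "(\<lambda>x. f x k) \<in> topspace (cantor_top S) \<rightarrow> topspace (discrete_topology S')"
      using assms(1) by auto
    fix U
    have "\<exists>m. cylinder S m x \<subseteq> {x \<in> topspace (cantor_top S). f x k \<in> U}"
      if x: "x \<in> topspace (cantor_top S)" and fx: "f x k \<in> U" for x
    proof -
      obtain m where "\<forall>x'\<in>cylinder S m x. f x' k = f x k"
        using assms(2)[OF x] by blast
      then show ?thesis
        using fx by (intro exI[of _ m]) (auto simp: cylinder_def)
    qed
    then show "openin (cantor_top S) {x \<in> topspace (cantor_top S). f x k \<in> U}"
      unfolding openin_cantor_top_iff by blast
  qed
qed

section \<open>Analytic sets\<close>

lemma analytic_setI:
  "closedin (prod_topology (cantor_top Y) baire_top) C \<Longrightarrow> E = fst ` C \<Longrightarrow> analytic_set Y E"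
  unfolding analytic_set_def by blast

lemma analytic_set_closedin:
  assumes "closedin (cantor_top Y) K"
  shows "analytic_set Y K"
proof -
  have "closedin baire_top {\<lambda>_. 0}"
    by (intro closedin_Hausdorff_singleton)
      (auto simp: baire_top_def Hausdorff_space_product_topology PiE_def Pi_def)
  then have "closedin (prod_topology (cantor_top Y) baire_top) (K \<times> {\<lambda>_. 0})"
    using assms by (simp add: closedin_prod_Times_iff)
  moreover have "K = fst ` (K \<times> {\<lambda>_. 0})"
    by force
  ultimately show ?thesis
    by (rule analytic_setI)
qed

lemma closedin_cylinder_witnesses:
  "closedin (prod_topology (cantor_top Y) baire_top)
     {(y, z). y \<in> topspace (cantor_top Y) \<and> cylinder Y (z 0) y \<subseteq> U}"
  (is "closedin _ ?D")
  unfolding closedin_cantor_baire_iff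
proof (intro conjI allI impI)
  show "?D \<subseteq> topspace (cantor_top Y) \<times> UNIV"
    by auto
  fix y z :: "nat \<Rightarrow> nat"
  assume y: "y \<in> topspace (cantor_top Y)"
    and "\<forall>n. \<exists>y' z'. (y', z') \<in> ?D \<and> agree n y' y \<and> agree n z' z"
  then obtain y' z' where "cylinder Y (z' 0) y' \<subseteq> U"
    and "agree (Suc (z 0)) y' y" "agree (Suc (z 0)) z' z"
    by blast
  moreover have "z' 0 = z 0" "cylinder Y (z 0) y' = cylinder Y (z 0) y"
    using calculation(2,3) by (auto simp: cylinder_def agree_def)
  ultimately show "(y, z) \<in> ?D"
    using y by simp
qed

text \<open>The first letter of a witness records the length of a cylinder inside U.\<close>
lemma analytic_set_openin:
  assumes U: "openin (cantor_top Y) U"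
  shows "analytic_set Y U"
proof -
  have "U = fst ` {(y, z). y \<in> topspace (cantor_top Y) \<and> cylinder Y (z 0) y \<subseteq> U}"
    (is "_ = fst ` ?D")
  proof (intro equalityI subsetI)
    fix y
    assume "y \<in> U"
    then obtain n where "cylinder Y n y \<subseteq> U"
      using openin_cantor_top_contains_cylinder[OF U] by blast
    moreover have "y \<in> topspace (cantor_top Y)"
      using \<open>y \<in> U\<close> openin_subset[OF U] by blast
    ultimately show "y \<in> fst ` ?D"
      by (intro image_eqI[of _ _ "(y, \<lambda>_. n)"]) auto
  next
    fix y
    assume "y \<in> fst ` ?D"
    then obtain z where "y \<in> topspace (cantor_top Y)" "cylinder Y (z 0) y \<subseteq> U"
      by auto
    then show "y \<in> U"
      using self_in_cylinder by blast
  qed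
  then show ?thesis
    by (rule analytic_setI[OF closedin_cylinder_witnesses])
qed

lemma closedin_select_witnesses:
  assumes C: "\<And>i. closedin (prod_topology (cantor_top Y) baire_top) (C i)"
  shows "closedin (prod_topology (cantor_top Y) baire_top) {(y, z). (y, \<lambda>k. z (Suc k)) \<in> C (z 0)}"
    (is "closedin _ ?D")
  unfolding closedin_cantor_baire_iff
proof (intro conjI allI impI)
  show "?D \<subseteq> topspace (cantor_top Y) \<times> UNIV"
    using C unfolding closedin_cantor_baire_iff by force
  fix y z
  assume y: "y \<in> topspace (cantor_top Y)"
    and approx: "\<forall>n. \<exists>y' z'. (y', z') \<in> ?D \<and> agree n y' y \<and> agree n z' z"
  have "\<exists>y' z'. (y', z') \<in> C (z 0) \<and> agree n y' y \<and> agree n z' (\<lambda>k. z (Suc k))" for n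
  proof -
    obtain y' z' where yz': "(y', \<lambda>k. z' (Suc k)) \<in> C (z' 0)"
      and agree: "agree (Suc n) y' y" "agree (Suc n) z' z"
      using approx by blast
    then have "(y', \<lambda>k. z' (Suc k)) \<in> C (z 0)"
      by (simp add: agree_def)
    moreover have "agree n y' y" "agree n (\<lambda>k. z' (Suc k)) (\<lambda>k. z (Suc k))"
      using agree by (simp_all add: agree_def)
    ultimately show ?thesis
      by blast
  qed
  then show "(y, z) \<in> ?D"
    using C[of "z 0", unfolded closedin_cantor_baire_iff] y by simp
qed

text \<open>The first letter of a witness selects the member of the union.\<close>
lemma analytic_set_UN:
  assumes "\<And>i::nat. analytic_set Y (E i)"
  shows "analytic_set Y (\<Union>i. E i)"
proof -
  obtain C where C: "\<And>i. closedin (prod_topology (cantor_top Y) baire_top) (C i)"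
    and E: "\<And>i. E i = fst ` C i"
    using assms unfolding analytic_set_def by metis
  have "(\<Union>i. E i) = fst ` {(y, z). (y, \<lambda>k. z (Suc k)) \<in> C (z 0)}"
    (is "_ = fst ` ?D")
  proof (intro equalityI subsetI)
    fix y
    assume "y \<in> (\<Union>i. E i)"
    then obtain i w where "(y, w) \<in> C i"
      using E by force
    then have "(y, case_nat i w) \<in> ?D"
      by simp
    then show "y \<in> fst ` ?D"
      by (rule rev_image_eqI) simp
  next
    fix y
    assume "y \<in> fst ` ?D"
    then obtain z where z: "(y, \<lambda>k. z (Suc k)) \<in> C (z 0)"
      by auto
    have "y \<in> E (z 0)"
      unfolding E by (rule image_eqI[OF _ z]) simp
    then show "y \<in> (\<Union>i. E i)"
      by blast
  qed
  then show ?thesis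
    by (rule analytic_setI[OF closedin_select_witnesses[OF C]])
qed

lemma closedin_interleaved_witnesses:
  assumes C: "\<And>i. closedin (prod_topology (cantor_top Y) baire_top) (C i)"
  shows "closedin (prod_topology (cantor_top Y) baire_top)
    {(y, z). y \<in> topspace (cantor_top Y) \<and> (\<forall>i. (y, \<lambda>k. z (prod_encode (i, k))) \<in> C i)}"
    (is "closedin _ ?D")
  unfolding closedin_cantor_baire_iff
proof (intro conjI allI impI)
  show "?D \<subseteq> topspace (cantor_top Y) \<times> UNIV"
    by auto
  fix y z
  assume y: "y \<in> topspace (cantor_top Y)"
    and approx: "\<forall>n. \<exists>y' z'. (y', z') \<in> ?D \<and> agree n y' y \<and> agree n z' z"
  have "\<exists>y' z'. (y', z') \<in> C i \<and> agree n y' y \<and> agree n z' (\<lambda>k. z (prod_encode (i, k)))" for i n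
  proof -
    obtain N where N: "\<And>k. k < n \<Longrightarrow> prod_encode (i, k) < N"
      using finite_nat_set_iff_bounded[of "(\<lambda>k. prod_encode (i, k)) ` {..<n}"] by auto
    obtain y' z' where yz': "(y', \<lambda>k. z' (prod_encode (i, k))) \<in> C i"
      and agree: "agree (max n N) y' y" "agree (max n N) z' z"
      using approx by blast
    moreover have "agree n y' y"
      and "agree n (\<lambda>k. z' (prod_encode (i, k))) (\<lambda>k. z (prod_encode (i, k)))"
      using agree N by (simp_all add: agree_def less_max_iff_disj)
    ultimately show ?thesis
      by blast
  qed
  then show "(y, z) \<in> ?D"
    using C[unfolded closedin_cantor_baire_iff] y by simp
qed

text \<open>A witness interleaves witnesses for all members of the intersection.\<close>
lemma analytic_set_INT:
  assumes "\<And>i::nat. analytic_set Y (E i)"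
  shows "analytic_set Y (\<Inter>i. E i)"
proof -
  obtain C where C: "\<And>i. closedin (prod_topology (cantor_top Y) baire_top) (C i)"
    and E: "\<And>i. E i = fst ` C i"
    using assms unfolding analytic_set_def by metis
  have "(\<Inter>i. E i) =
      fst ` {(y, z). y \<in> topspace (cantor_top Y) \<and> (\<forall>i. (y, \<lambda>k. z (prod_encode (i, k))) \<in> C i)}"
    (is "_ = fst ` ?D")
  proof (intro equalityI subsetI)
    fix y
    assume "y \<in> (\<Inter>i. E i)"
    then have "\<forall>i. \<exists>w. (y, w) \<in> C i"
      using E by force
    then obtain w where w: "\<And>i. (y, w i) \<in> C i"
      by metis
    moreover have "y \<in> topspace (cantor_top Y)"
      using w[of 0] C[of 0, unfolded closedin_cantor_baire_iff] by blast
    ultimately have "(y, \<lambda>m. case prod_decode m of (i, k) \<Rightarrow> w i k) \<in> ?D"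
      by simp
    then show "y \<in> fst ` ?D"
      by (rule rev_image_eqI) simp
  next
    fix y
    assume "y \<in> fst ` ?D"
    then obtain z where z: "\<forall>i. (y, \<lambda>k. z (prod_encode (i, k))) \<in> C i"
      by auto
    have "y \<in> E i" for i
      unfolding E by (rule image_eqI[OF _ z[rule_format, of i]]) simp
    then show "y \<in> (\<Inter>i. E i)"
      by blast
  qed
  then show ?thesis
    by (rule analytic_setI[OF closedin_interleaved_witnesses[OF C]])
qed

lemma analytic_set_borel_in_complement:
  assumes "borel_in (cantor_top Y) B"
  shows "analytic_set Y (topspace (cantor_top Y) - B)"
proof -
  let ?X = "topspace (cantor_top Y)"
  have "analytic_set Y B \<and> analytic_set Y (?X - B)"
    using assms unfolding borel_in_def
  proof (induction rule: sigma_sets.induct)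
    case (Basic U)
    then have U: "openin (cantor_top Y) U"
      by simp
    then have "closedin (cantor_top Y) (?X - U)"
      by (rule closedin_diff[OF closedin_topspace])
    then show ?case
      using analytic_set_openin[OF U] analytic_set_closedin by blast
  next
    case Empty
    show ?case
      using analytic_set_closedin[OF closedin_empty] analytic_set_closedin[OF closedin_topspace]
      by simp
  next
    case (Compl B)
    have "B \<subseteq> ?X"
      using sigma_sets_into_sp[OF _ Compl.hyps] openin_subset by blast
    then have "?X - (?X - B) = B"
      by blast
    then show ?case
      using Compl.IH by simp
  next
    case (Union B)
    have "?X - \<Union> (range B) = (\<Inter>i. ?X - B i)"
      by blast
    then show ?case
      using Union.IH analytic_set_UN[of Y B] analytic_set_INT[of Y "\<lambda>i. ?X - B i"] by simp
  qed
  then show ?thesis ..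
qed

lemma borel_in_preimage:
  assumes f: "continuous_map X X' f" and "borel_in X' B"
  shows "borel_in X {x \<in> topspace X. f x \<in> B}"
  using assms(2) unfolding borel_in_def
proof (induction rule: sigma_sets.induct)
  case (Basic U)
  then show ?case
    using openin_continuous_map_preimage[OF f] by (simp add: sigma_sets.Basic)
next
  case Empty
  show ?case
    by (simp add: sigma_sets.Empty)
next
  case (Compl B)
  have "{x \<in> topspace X. f x \<in> topspace X' - B} = topspace X - {x \<in> topspace X. f x \<in> B}"
    using f by (auto simp: continuous_map_def)
  then show ?case
    using Compl.IH by (simp add: sigma_sets.Compl)
next
  case (Union B)
  have "{x \<in> topspace X. f x \<in> \<Union> (range B)} = (\<Union>i. {x \<in> topspace X. f x \<in> B i})"
    by blast
  then show ?case
    using Union.IH by (simp add: sigma_sets.Union)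
qed

lemma analytic_set_preimage:
  assumes f: "continuous_map (cantor_top Y) (cantor_top S) f" and F: "analytic_set S F"
  shows "analytic_set Y {y \<in> topspace (cantor_top Y). f y \<in> F}"
proof -
  obtain C where C: "closedin (prod_topology (cantor_top S) baire_top) C" "F = fst ` C"
    using F unfolding analytic_set_def by blast
  define g where "g = (\<lambda>p :: (nat \<Rightarrow> nat) \<times> (nat \<Rightarrow> nat). (f (fst p), snd p))"
  have "continuous_map (prod_topology (cantor_top Y) baire_top)
      (prod_topology (cantor_top S) baire_top) g"
    unfolding g_def
    by (intro continuous_map_pairedI continuous_map_compose[OF continuous_map_fst f, unfolded o_def]
        continuous_map_snd)
  then have "closedin (prod_topology (cantor_top Y) baire_top)
      {p \<in> topspace (prod_topology (cantor_top Y) baire_top). g p \<in> C}"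
    using C(1) by (rule closedin_continuous_map_preimage)
  moreover have "{y \<in> topspace (cantor_top Y). f y \<in> F} =
      fst ` {p \<in> topspace (prod_topology (cantor_top Y) baire_top). g p \<in> C}"
  proof (intro equalityI subsetI)
    fix y
    assume "y \<in> {y \<in> topspace (cantor_top Y). f y \<in> F}"
    then obtain z where "y \<in> topspace (cantor_top Y)" "(f y, z) \<in> C"
      using C(2) by auto
    then have "(y, z) \<in> {p \<in> topspace (prod_topology (cantor_top Y) baire_top). g p \<in> C}"
      by (simp add: g_def baire_top_eq)
    then show "y \<in> fst ` {p \<in> topspace (prod_topology (cantor_top Y) baire_top). g p \<in> C}"
      by force
  next
    fix y
    assume "y \<in> fst ` {p \<in> topspace (prod_topology (cantor_top Y) baire_top). g p \<in> C}"
    then obtain z where "y \<in> topspace (cantor_top Y)" "(f y, z) \<in> C"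
      by (auto simp: g_def)
    then show "y \<in> {y \<in> topspace (cantor_top Y). f y \<in> F}"
      using C(2) by force
  qed
  ultimately show ?thesis
    by (rule analytic_setI)
qed

definition section_tree :: "((nat \<Rightarrow> nat) \<times> (nat \<Rightarrow> nat)) set \<Rightarrow> (nat \<Rightarrow> nat) \<Rightarrow> nat list set" where
  "section_tree C y = {v. \<exists>y' z'. (y', z') \<in> C \<and> agree (length v) y' y \<and> map z' [0..<length v] = v}"

lemma section_tree_take: "v \<in> section_tree C y \<Longrightarrow> take d v \<in> section_tree C y"
proof -
  assume "v \<in> section_tree C y"
  then obtain y' z' where yz': "(y', z') \<in> C" "agree (length v) y' y" "map z' [0..<length v] = v"
    by (auto simp: section_tree_def)
  have "agree (length (take d v)) y' y"
    using yz'(2) by (auto simp: agree_def)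
  moreover have "map z' [0..<length (take d v)] = take d v"
  proof -
    have "take d v = map z' (take d [0..<length v])"
      using yz'(3) by (metis take_map)
    then show ?thesis
      by (simp add: take_upt min_def)
  qed
  ultimately show ?thesis
    using yz'(1) by (auto simp: section_tree_def)
qed

lemma section_tree_cong:
  "agree n y1 y2 \<Longrightarrow> length v \<le> n \<Longrightarrow> v \<in> section_tree C y1 \<longleftrightarrow> v \<in> section_tree C y2"
  unfolding section_tree_def agree_def by auto

lemma closedin_fst_image_iff_branch:
  assumes C: "closedin (prod_topology (cantor_top Y) baire_top) C"
    and y: "y \<in> topspace (cantor_top Y)"
  shows "y \<in> fst ` C \<longleftrightarrow> (\<exists>b. \<forall>d. map b [0..<d] \<in> section_tree C y)"
proof
  assume "y \<in> fst ` C"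
  then obtain z where "(y, z) \<in> C"
    by force
  then have "map z [0..<d] \<in> section_tree C y" for d
    by (auto simp: section_tree_def agree_def)
  then show "\<exists>b. \<forall>d. map b [0..<d] \<in> section_tree C y"
    by blast
next
  assume "\<exists>b. \<forall>d. map b [0..<d] \<in> section_tree C y"
  then obtain b where b: "\<And>d. map b [0..<d] \<in> section_tree C y"
    by blast
  have "\<exists>y' z'. (y', z') \<in> C \<and> agree n y' y \<and> agree n z' b" for n
    using b[of n] by (auto simp: section_tree_def agree_iff_map_eq)
  then have "(y, b) \<in> C"
    using C y unfolding closedin_cantor_baire_iff by blast
  then show "y \<in> fst ` C"
    by force
qed

section \<open>Sigma^1_1-complete sets are not Borel\<close>

text \<open>Read a point y of {0,1}^omega as the set of pairs of finite sequences (u, v) with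
  y (to_nat (u, v)) = 1; this set determines a closed subset of {0,1}^omega x omega^omega, and
  y is in the diagonal set iff y lies in the projection of the closed set it determines.\<close>
definition diagonal_set :: "(nat \<Rightarrow> nat) set" where
  "diagonal_set = {y. (\<forall>n. y n \<in> {0,1}) \<and>
     (\<exists>z::nat \<Rightarrow> nat. \<forall>n. y (to_nat (map y [0..<n], map z [0..<n])) = 1)}"

lemma analytic_set_diagonal_set: "analytic_set {0,1} diagonal_set"
proof -
  define C where "C = {(y, z::nat \<Rightarrow> nat). (\<forall>n. y n \<in> {0::nat,1}) \<and>
      (\<forall>n. y (to_nat (map y [0..<n], map z [0..<n])) = 1)}"
  have "closedin (prod_topology (cantor_top {0,1}) baire_top) C"
    unfolding closedin_cantor_baire_iff
  proof (intro conjI allI impI)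
    show "C \<subseteq> topspace (cantor_top {0,1}) \<times> UNIV"
      by (auto simp: C_def)
    fix y z
    assume y: "y \<in> topspace (cantor_top {0,1})"
      and approx: "\<forall>n. \<exists>y' z'. (y', z') \<in> C \<and> agree n y' y \<and> agree n z' z"
    have "y (to_nat (map y [0..<n], map z [0..<n])) = 1" for n
    proof -
      define k where "k = to_nat (map y [0..<n], map z [0..<n])"
      obtain y' z' where yz': "(y', z') \<in> C"
        and agree: "agree (max n (Suc k)) y' y" "agree (max n (Suc k)) z' z"
        using approx by blast
      have prefixes: "map y' [0..<n] = map y [0..<n]" "map z' [0..<n] = map z [0..<n]"
        using agree_mono[OF agree(1) max.cobounded1] agree_mono[OF agree(2) max.cobounded1]
        by (simp_all add: agree_iff_map_eq)
      have "y' (to_nat (map y' [0..<n], map z' [0..<n])) = 1"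
        using yz'(1) by (simp add: C_def)
      then have "y' k = 1"
        unfolding prefixes k_def .
      moreover have "y' k = y k"
        using agree(1) by (simp add: agree_def)
      ultimately show ?thesis
        by (simp add: k_def)
    qed
    then show "(y, z) \<in> C"
      using y by (simp add: C_def)
  qed
  moreover have "diagonal_set = fst ` C"
    by (force simp: diagonal_set_def C_def)
  ultimately show ?thesis
    by (rule analytic_setI)
qed

definition prefix_code :: "((nat \<Rightarrow> nat) \<times> (nat \<Rightarrow> nat)) set \<Rightarrow> nat \<Rightarrow> nat" where
  "prefix_code C k =
     (if from_nat k \<in> {(map y [0..<n], map z [0..<n]) | y z n. (y, z) \<in> C} then 1 else 0)"

lemma prefix_code_iff:
  "prefix_code C (to_nat (map x [0..<n], map z [0..<n])) = 1 \<longleftrightarrow> map z [0..<n] \<in> section_tree C x"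
proof
  assume "prefix_code C (to_nat (map x [0..<n], map z [0..<n])) = 1"
  then have "from_nat (to_nat (map x [0..<n], map z [0..<n])) \<in>
      {(map y [0..<n], map z [0..<n]) | y z n. (y, z) \<in> C}"
    unfolding prefix_code_def by (metis zero_neq_one)
  then obtain y z' m where yz': "(y, z') \<in> C"
    and eq: "(map x [0..<n], map z [0..<n]) = (map y [0..<m], map z' [0..<m])"
    unfolding from_nat_to_nat by blast
  then have "m = n"
    by (metis diff_zero length_map length_upt prod.inject)
  with eq have "agree n y x" "map z' [0..<n] = map z [0..<n]"
    unfolding agree_iff_map_eq by auto
  with yz' show "map z [0..<n] \<in> section_tree C x"
    unfolding section_tree_def by auto
next
  assume "map z [0..<n] \<in> section_tree C x"
  then obtain y z' where "(y, z') \<in> C" "agree n y x" "map z' [0..<n] = map z [0..<n]"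
    unfolding section_tree_def by auto
  then have "(map x [0..<n], map z [0..<n]) \<in> {(map y [0..<n], map z [0..<n]) | y z n. (y, z) \<in> C}"
    unfolding agree_iff_map_eq by (metis (mono_tags, lifting) mem_Collect_eq)
  then show "prefix_code C (to_nat (map x [0..<n], map z [0..<n])) = 1"
    by (simp add: prefix_code_def)
qed

text \<open>If the complement of the diagonal set were the projection of a closed set C, the prefix
  code of C would belong to the diagonal set iff it does not.\<close>
lemma not_analytic_set_diagonal_complement:
  "\<not> analytic_set {0,1} (topspace (cantor_top {0,1}) - diagonal_set)"
proof
  assume "analytic_set {0,1} (topspace (cantor_top {0,1}) - diagonal_set)"
  then obtain C where C: "closedin (prod_topology (cantor_top {0,1}) baire_top) C"
    and proj: "topspace (cantor_top {0,1}) - diagonal_set = fst ` C"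
    unfolding analytic_set_def by blast
  have x: "prefix_code C \<in> topspace (cantor_top {0,1})"
    by (simp add: prefix_code_def)
  have "prefix_code C \<in> diagonal_set \<longleftrightarrow>
      (\<exists>z::nat \<Rightarrow> nat. \<forall>n. prefix_code C (to_nat (map (prefix_code C) [0..<n], map z [0..<n])) = 1)"
    using x by (simp add: diagonal_set_def)
  also have "\<dots> \<longleftrightarrow> (\<exists>z. \<forall>n. map z [0..<n] \<in> section_tree C (prefix_code C))"
    unfolding prefix_code_iff ..
  also have "\<dots> \<longleftrightarrow> prefix_code C \<in> fst ` C"
    using closedin_fst_image_iff_branch[OF C x] by simp
  finally show False
    using proj x by blast
qed

lemma sigma11_complete_not_borel:
  assumes "sigma11_complete \<Sigma> F"
  shows "\<not> borel_in (cantor_top \<Sigma>) F"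
proof
  assume F: "borel_in (cantor_top \<Sigma>) F"
  have "diagonal_set \<subseteq> topspace (cantor_top {0,1})" "finite {0,1::nat}"
    by (auto simp: diagonal_set_def)
  then obtain f where f: "continuous_map (cantor_top {0,1}) (cantor_top \<Sigma>) f"
      and diag: "diagonal_set = {y \<in> topspace (cantor_top {0,1}). f y \<in> F}"
    using assms analytic_set_diagonal_set unfolding sigma11_complete_def by blast
  have "borel_in (cantor_top {0,1}) diagonal_set"
    unfolding diag by (rule borel_in_preimage[OF f F])
  then show False
    using analytic_set_borel_in_complement not_analytic_set_diagonal_complement by blast
qed

section \<open>Buechi languages are analytic\<close>

lemma is_run_limit:
  assumes "\<And>n. \<exists>x' q' c'. is_run A x' q' c' \<and> (\<forall>i<n. x' i = x i \<and> q' i = q i \<and> c' i = c i)"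
  shows "is_run A x q c"
  unfolding is_run_def
proof (intro conjI allI)
  show "q 0 = init A" "c 0 = 0"
    using assms[of 1] by (auto simp: is_run_def)
  fix i
  obtain x' q' c' where window: "\<forall>j<Suc (Suc i). x' j = x j \<and> q' j = q j \<and> c' j = c j"
    and run: "is_run A x' q' c'"
    using assms by blast
  from run obtain d where "(q' i, x' i, d, q' (Suc i)) \<in> trans A"
    and "int (c' (Suc i)) = int (c' i) + d"
    unfolding is_run_def by blast
  moreover have "x' i = x i" "q' i = q i" "q' (Suc i) = q (Suc i)"
    and "c' i = c i" "c' (Suc i) = c (Suc i)"
    using window by simp_all
  ultimately show "\<exists>d. (q i, x i, d, q (Suc i)) \<in> trans A \<and> int (c (Suc i)) = int (c i) + d"
    by auto
qed

text \<open>A run together with, at every time i, a later visit g i to a final state, coded as a single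
  point of the Baire space; the visits make the Buechi condition a closed one.\<close>
definition run_codes :: "bcba \<Rightarrow> ((nat \<Rightarrow> nat) \<times> (nat \<Rightarrow> nat)) set" where
  "run_codes A = {(x, z). \<exists>q c g. (\<forall>n. z n = to_nat (q n, c n, g n :: nat)) \<and> (\<forall>n. x n \<in> alph A) \<and>
     is_run A x q c \<and> (\<forall>i. i \<le> g i \<and> q (g i) \<in> final A)}"

lemma closedin_run_codes: "closedin (prod_topology (cantor_top (alph A)) baire_top) (run_codes A)"
  unfolding closedin_cantor_baire_iff
proof (intro conjI allI impI)
  show "run_codes A \<subseteq> topspace (cantor_top (alph A)) \<times> UNIV"
    by (auto simp: run_codes_def)
  fix x z
  assume x: "x \<in> topspace (cantor_top (alph A))"
    and approx: "\<forall>n. \<exists>x' z'. (x', z') \<in> run_codes A \<and> agree n x' x \<and> agree n z' z"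
  define q where "q n = fst (from_nat (z n) :: nat \<times> nat \<times> nat)" for n
  define c where "c n = fst (snd (from_nat (z n) :: nat \<times> nat \<times> nat))" for n
  define g where "g n = snd (snd (from_nat (z n) :: nat \<times> nat \<times> nat))" for n
  have window: "\<exists>x' q' c' g'.
      (\<forall>i<n. x' i = x i \<and> q' i = q i \<and> c' i = c i \<and> g' i = g i \<and> z i = to_nat (q i, c i, g i)) \<and>
      is_run A x' q' c' \<and> (\<forall>i. i \<le> g' i \<and> q' (g' i) \<in> final A)" for n
  proof -
    obtain x' z' q' c' g' where z': "\<And>i. z' i = to_nat (q' i, c' i, g' i)"
      and run: "is_run A x' q' c'" "\<forall>i. i \<le> g' i \<and> q' (g' i) \<in> final A"
      and agree: "agree n x' x" "agree n z' z"
      using approx unfolding run_codes_def by blast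
    have "z i = to_nat (q' i, c' i, g' i)" if "i < n" for i
      using agree(2) that z' by (simp add: agree_def)
    then have "q' i = q i \<and> c' i = c i \<and> g' i = g i \<and> z i = to_nat (q i, c i, g i)" if "i < n" for i
      using that by (simp add: q_def c_def g_def)
    with agree(1) run show ?thesis
      unfolding agree_def by blast
  qed
  have "is_run A x q c"
  proof (rule is_run_limit)
    fix n
    obtain x' q' c' g' where "\<forall>i<n. x' i = x i \<and> q' i = q i \<and> c' i = c i \<and> g' i = g i \<and>
        z i = to_nat (q i, c i, g i)" "is_run A x' q' c'"
      using window[of n] by blast
    then show "\<exists>x' q' c'. is_run A x' q' c' \<and> (\<forall>i<n. x' i = x i \<and> q' i = q i \<and> c' i = c i)"
      by blast
  qed
  moreover have "i \<le> g i \<and> q (g i) \<in> final A" for i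
  proof -
    obtain q' g' where w: "\<forall>j<Suc (max i (g i)). q' j = q j \<and> g' j = g j"
      and visits: "\<forall>i. i \<le> g' i \<and> q' (g' i) \<in> final A"
      using window[of "Suc (max i (g i))"] by blast
    have "g' i = g i" "q' (g i) = q (g i)"
      using w by (simp_all add: less_Suc_eq_le)
    with visits show ?thesis
      by metis
  qed
  moreover have "z n = to_nat (q n, c n, g n)" for n
    using window[of "Suc n"] by blast
  ultimately show "(x, z) \<in> run_codes A"
    using x unfolding run_codes_def by auto
qed

lemma omega_lang_eq_fst_run_codes: "omega_lang A = fst ` run_codes A"
proof
  show "fst ` run_codes A \<subseteq> omega_lang A"
  proof
    fix x
    assume "x \<in> fst ` run_codes A"
    then obtain q c g where x: "\<forall>n. x n \<in> alph A" and run: "is_run A x q c"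
      and visits: "\<forall>i. i \<le> g i \<and> q (g i) \<in> final A"
      unfolding run_codes_def by auto
    have "infinite {i. q i \<in> final A}"
      unfolding infinite_nat_iff_unbounded_le using visits by blast
    with x run show "x \<in> omega_lang A"
      unfolding omega_lang_def by blast
  qed
  show "omega_lang A \<subseteq> fst ` run_codes A"
  proof
    fix x
    assume "x \<in> omega_lang A"
    then obtain q c where x: "\<forall>n. x n \<in> alph A" and run: "is_run A x q c"
      and inf: "infinite {i. q i \<in> final A}"
      unfolding omega_lang_def by blast
    define g where "g i = (LEAST j. i \<le> j \<and> q j \<in> final A)" for i
    have "i \<le> g i \<and> q (g i) \<in> final A" for i
    proof -
      have "\<exists>j. i \<le> j \<and> q j \<in> final A"
        using inf unfolding infinite_nat_iff_unbounded_le by blast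
      then show ?thesis
        unfolding g_def by (rule LeastI_ex)
    qed
    then have "(x, \<lambda>n. to_nat (q n, c n, g n)) \<in> run_codes A"
      using x run unfolding run_codes_def by blast
    then show "x \<in> fst ` run_codes A"
      by force
  qed
qed

lemma analytic_set_omega_lang: "analytic_set (alph A) (omega_lang A)"
  by (rule analytic_setI[OF closedin_run_codes omega_lang_eq_fst_run_codes])

section \<open>The word of a tree\<close>

text \<open>Letters: 0 increments the counter, 1 is a pointer unit (decrement), 2 and 3 are heads
  offering a node that persists resp. extends the node guessed at the previous stage, 4 ends a
  stage and 5 is padding. State 0 counts zeros until it guesses a head; states 2 and 3 then
  consume the pointer after that head; state 1 waits for the end of the stage. Only state 3,
  entered when the guessed branch grows, is final.\<close>
definition branch_trans :: "(nat \<times> nat \<times> int \<times> nat) set" where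
  "branch_trans = {(0,0,1,0),(0,1,0,0),(0,5,0,0),(0,2,0,0),(0,2,0,2),(0,3,0,0),(0,3,0,3),
     (1,0,1,1),(1,1,0,1),(1,2,0,1),(1,3,0,1),(1,5,0,1),(1,4,0,0),
     (2,1,-1,2),(2,0,1,1),(2,2,0,1),(2,3,0,1),(2,5,0,1),(2,4,0,0),
     (3,1,-1,2),(3,0,1,1),(3,2,0,1),(3,3,0,1),(3,5,0,1),(3,4,0,0)}"

definition branch_automaton :: bcba where
  "branch_automaton =
     \<lparr>states = {0,1,2,3}, alph = {0,1,2,3,4,5}, trans = branch_trans, init = 0, final = {3}\<rparr>"

lemma wf_branch_automaton: "wf_bcba branch_automaton"
  by (auto simp: wf_bcba_def branch_automaton_def branch_trans_def)

lemma branch_trans_count: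
  "q \<in> {0,1} \<Longrightarrow> a \<in> {0,1,2,3,5} \<Longrightarrow> (q, a, if a = 0 then 1 else 0, q) \<in> branch_trans"
  unfolding branch_trans_def by (elim insertE emptyE) simp_all

lemma branch_trans_guess: "(0, if b then 3 else 2, 0, if b then 3 else 2) \<in> branch_trans"
  by (simp add: branch_trans_def)

lemma branch_trans_ptr: "q \<in> {2,3} \<Longrightarrow> (q, 1, -1, 2) \<in> branch_trans"
  by (auto simp: branch_trans_def)

lemma branch_trans_leave_ptr:
  "q \<in> {2,3} \<Longrightarrow> a \<in> {0,2,3,5} \<Longrightarrow> (q, a, if a = 0 then 1 else 0, 1) \<in> branch_trans"
  unfolding branch_trans_def by (elim insertE emptyE) simp_all

lemma branch_trans_separator: "q \<in> {1,2,3} \<Longrightarrow> (q, 4, 0, 0) \<in> branch_trans"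
  by (auto simp: branch_trans_def)

text \<open>Stage k of the word consists of num_cells k cells and a separator. A cell starts with
  cell_zeros k zeros, more than all zeros of the previous stages together, and then has two
  halves of max_ptr k + 1 letters each: a head followed by room for a pointer.\<close>
definition num_cells :: "nat \<Rightarrow> nat" where
  "num_cells k = Suc k ^ k"

fun stage_zeros :: "nat \<Rightarrow> nat" where
  "stage_zeros 0 = 0"
| "stage_zeros (Suc k) = stage_zeros k + num_cells k * (stage_zeros k + 1)"

definition cell_zeros :: "nat \<Rightarrow> nat" where
  "cell_zeros k = stage_zeros k + 1"

definition max_ptr :: "nat \<Rightarrow> nat" where
  "max_ptr k = stage_zeros (Suc k)"

definition cell_len :: "nat \<Rightarrow> nat" where
  "cell_len k = cell_zeros k + 2 * Suc (max_ptr k)"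

fun stage_start :: "nat \<Rightarrow> nat" where
  "stage_start 0 = 0"
| "stage_start (Suc k) = stage_start k + num_cells k * cell_len k + 1"

abbreviation stage_end :: "nat \<Rightarrow> nat" where
  "stage_end k \<equiv> stage_start k + num_cells k * cell_len k"

lemma num_cells_pos: "0 < num_cells k"
  by (simp add: num_cells_def)

lemma cell_zeros_pos: "0 < cell_zeros k"
  by (simp add: cell_zeros_def)

lemma stage_zeros_Suc_cells: "stage_zeros (Suc k) = stage_zeros k + num_cells k * cell_zeros k"
  by (simp add: cell_zeros_def)

lemma cell_offset_le_stage:
  assumes "r < num_cells k" "q \<le> cell_len k"
  shows "r * cell_len k + q \<le> num_cells k * cell_len k"
proof -
  have "r * cell_len k + q \<le> Suc r * cell_len k"
    using assms(2) by simp
  also have "\<dots> \<le> num_cells k * cell_len k"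
    using assms(1) by (intro mult_right_mono) auto
  finally show ?thesis .
qed

lemma strict_mono_stage_start: "strict_mono stage_start"
  by (rule strict_mono_Suc_iff[THEN iffD2]) simp

definition stage_of :: "nat \<Rightarrow> nat" where
  "stage_of n = (LEAST k. n < stage_start (Suc k))"

lemma stage_of_bounds: "stage_start (stage_of n) \<le> n \<and> n \<le> stage_end (stage_of n)"
proof
  have "n < stage_start (Suc n)"
    using strict_mono_stage_start[THEN strict_mono_imp_increasing, of "Suc n"] by simp
  then have "n < stage_start (Suc (stage_of n))"
    unfolding stage_of_def by (rule LeastI)
  then show "n \<le> stage_end (stage_of n)"
    by simp
  show "stage_start (stage_of n) \<le> n"
  proof (cases "stage_of n")
    case (Suc m)
    then have "\<not> n < stage_start (Suc m)"
      unfolding stage_of_def by (metis Least_le Suc_n_not_le_n)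
    then show ?thesis
      using Suc by simp
  qed simp
qed

lemma stage_of_eqI:
  assumes "stage_start k \<le> n" "n \<le> stage_end k"
  shows "stage_of n = k"
proof -
  have "stage_start (stage_of n) < stage_start (Suc k)"
    using stage_of_bounds[of n] assms(2) by simp
  then have "stage_of n < Suc k"
    using strict_mono_less[OF strict_mono_stage_start] by blast
  moreover have "stage_start k < stage_start (Suc (stage_of n))"
    using stage_of_bounds[of n] assms(1) by simp
  then have "k < Suc (stage_of n)"
    using strict_mono_less[OF strict_mono_stage_start] by blast
  ultimately show ?thesis
    by linarith
qed

definition nodes :: "nat \<Rightarrow> nat list set" where
  "nodes k = {v. length v \<le> k \<and> (\<forall>x\<in>set v. x < k)}"

lemma nodes_0: "nodes 0 = {[]}"
  by (auto simp: nodes_def)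

text \<open>A node of stage k, padded to length k with the digit k, read as a number in base k + 1.
  Padding with the largest digit makes this code monotone for the Kleene-Brouwer order kb_le,
  in which a proper extension lies below the node it extends.\<close>
definition pad_digit :: "nat \<Rightarrow> nat list \<Rightarrow> nat \<Rightarrow> nat" where
  "pad_digit k v i = (if i < length v then v ! i else k)"

fun digits_value :: "nat \<Rightarrow> nat list \<Rightarrow> nat \<Rightarrow> nat" where
  "digits_value k v 0 = 0"
| "digits_value k v (Suc n) = digits_value k v n * Suc k + pad_digit k v n"

definition kb_code :: "nat \<Rightarrow> nat list \<Rightarrow> nat" where
  "kb_code k v = digits_value k v k"

definition kb_le :: "nat list \<Rightarrow> nat list \<Rightarrow> bool" where
  "kb_le u v \<longleftrightarrow> (\<forall>d. take d u = take d v \<longrightarrow> d < length v \<longrightarrow> d < length u \<and> u ! d \<le> v ! d)"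

lemma pad_digit_le: "v \<in> nodes k \<Longrightarrow> pad_digit k v i \<le> k"
  by (auto simp: pad_digit_def nodes_def less_imp_le)

lemma digits_value_less: "v \<in> nodes k \<Longrightarrow> digits_value k v n < Suc k ^ n"
proof (induction n)
  case (Suc n)
  have "digits_value k v n * Suc k + pad_digit k v n < (digits_value k v n + 1) * Suc k"
    using pad_digit_le[OF Suc.prems, of n] by simp
  also have "\<dots> \<le> Suc k ^ n * Suc k"
    using Suc by (intro mult_right_mono) simp_all
  finally show ?case
    by (simp add: mult.commute)
qed simp

lemma digits_value_mono_strict:
  assumes v: "v \<in> nodes k" and "i < n"
    and same: "\<forall>j<i. pad_digit k u j = pad_digit k v j"
    and less: "pad_digit k v i < pad_digit k u i"
  shows "digits_value k v n < digits_value k u n"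
  using \<open>i < n\<close>
proof (induction n)
  case (Suc n)
  show ?case
  proof (cases "i = n")
    case True
    have "digits_value k u m = digits_value k v m" if "m \<le> i" for m
      using that same by (induction m) auto
    then show ?thesis
      using True less by simp
  next
    case False
    then have "digits_value k v n + 1 \<le> digits_value k u n"
      using Suc by simp
    then have "(digits_value k v n + 1) * Suc k \<le> digits_value k u n * Suc k"
      by (rule mult_right_mono) simp
    then show ?thesis
      using pad_digit_le[OF v, of n] by simp
  qed
qed simp

lemma kb_code_less: "v \<in> nodes k \<Longrightarrow> kb_code k v < num_cells k"
  by (simp add: kb_code_def num_cells_def digits_value_less)

lemma kb_le_if_kb_code_le:
  assumes u: "u \<in> nodes k" and v: "v \<in> nodes k" and le: "kb_code k u \<le> kb_code k v"
  shows "kb_le u v"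
  unfolding kb_le_def
proof (intro allI impI)
  fix d
  assume prefix: "take d u = take d v" and d: "d < length v"
  then have "length (take d u) = d"
    by simp
  then have "d \<le> length u"
    by simp
  have same: "\<forall>j<d. pad_digit k u j = pad_digit k v j"
  proof (intro allI impI)
    fix j
    assume "j < d"
    then have "u ! j = v ! j"
      using prefix by (metis nth_take)
    then show "pad_digit k u j = pad_digit k v j"
      using \<open>j < d\<close> \<open>d \<le> length u\<close> d by (simp add: pad_digit_def)
  qed
  have "d < k"
    using d v by (auto simp: nodes_def)
  show "d < length u \<and> u ! d \<le> v ! d"
  proof (rule ccontr)
    assume "\<not> (d < length u \<and> u ! d \<le> v ! d)"
    then have "pad_digit k v d < pad_digit k u d"
      using d v by (auto simp: pad_digit_def nodes_def)
    then have "digits_value k v k < digits_value k u k"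
      using digits_value_mono_strict[OF v \<open>d < k\<close> same] by blast
    with le show False
      by (simp add: kb_code_def)
  qed
qed

lemma kb_le_antisym:
  assumes uv: "kb_le u v" and vu: "kb_le v u"
  shows "u = v"
proof -
  have "take d u = take d v" for d
  proof (induction d)
    case (Suc d)
    show ?case
    proof (cases "d < length v")
      case True
      then have "d < length u \<and> u ! d \<le> v ! d"
        using uv Suc unfolding kb_le_def by blast
      moreover have "v ! d \<le> u ! d"
        using vu Suc calculation unfolding kb_le_def by (metis (no_types))
      ultimately show ?thesis
        using Suc True by (simp add: take_Suc_conv_app_nth)
    next
      case False
      then have "\<not> d < length u"
        using vu Suc unfolding kb_le_def by (metis (no_types))
      then show ?thesis
        using Suc False by simp
    qed
  qed simp
  then have "take (length u + length v) u = take (length u + length v) v" .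
  then show ?thesis
    by simp
qed

lemma kb_leD: "kb_le u v \<Longrightarrow> take d u = take d v \<Longrightarrow> d < length v \<Longrightarrow> d < length u \<and> u ! d \<le> v ! d"
  unfolding kb_le_def by blast

lemma kb_le_iff_kb_code_le:
  assumes u: "u \<in> nodes k" and v: "v \<in> nodes k"
  shows "kb_le u v \<longleftrightarrow> kb_code k u \<le> kb_code k v"
proof
  assume uv: "kb_le u v"
  show "kb_code k u \<le> kb_code k v"
  proof (rule ccontr)
    assume "\<not> kb_code k u \<le> kb_code k v"
    then have "kb_le v u" "u \<noteq> v"
      using kb_le_if_kb_code_le[OF v u] by auto
    with uv show False
      using kb_le_antisym by blast
  qed
qed (rule kb_le_if_kb_code_le[OF u v])

lemma nodes_mono: "k \<le> k' \<Longrightarrow> nodes k \<subseteq> nodes k'"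
  by (auto simp: nodes_def)

lemma in_nodes_Suc_sum_list: "v \<in> nodes (length v + Suc (sum_list v))"
  by (auto simp: nodes_def dest: member_le_sum_list)

lemma kb_le_trans:
  assumes "kb_le u v" "kb_le v w"
  shows "kb_le u w"
proof -
  define k where "k = Suc (length u + length v + length w + sum_list u + sum_list v + sum_list w)"
  have "u \<in> nodes k" "v \<in> nodes k" "w \<in> nodes k"
    by (rule subsetD[OF nodes_mono in_nodes_Suc_sum_list], simp add: k_def)+
  then show ?thesis
    using assms kb_le_iff_kb_code_le by (meson order.trans)
qed

lemma kb_le_snoc: "kb_le (v @ [x]) v"
  by (auto simp: kb_le_def nth_append)

lemma not_kb_le_butlast: "v \<noteq> [] \<Longrightarrow> \<not> kb_le (butlast v) v"
  using kb_leD[of "butlast v" v "length v - 1"] by (auto simp: butlast_conv_take)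

text \<open>Nodes with larger code come first, so that moving to a later cell means moving down in the
  Kleene-Brouwer order.\<close>
definition cell_index :: "nat \<Rightarrow> nat list \<Rightarrow> nat" where
  "cell_index k v = num_cells k - 1 - kb_code k v"

definition cell_node :: "nat \<Rightarrow> nat \<Rightarrow> nat list" where
  "cell_node k = the_inv_into (nodes k) (cell_index k)"

lemma cell_index_less: "cell_index k v < num_cells k"
  using num_cells_pos by (simp add: cell_index_def)

lemma cell_index_le_iff:
  "u \<in> nodes k \<Longrightarrow> v \<in> nodes k \<Longrightarrow> cell_index k u \<le> cell_index k v \<longleftrightarrow> kb_code k v \<le> kb_code k u"
  using kb_code_less[of u k] kb_code_less[of v k] unfolding cell_index_def by linarith

lemma inj_on_cell_index: "inj_on (cell_index k) (nodes k)"
proof (rule inj_onI)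
  fix u v
  assume u: "u \<in> nodes k" and v: "v \<in> nodes k" and "cell_index k u = cell_index k v"
  then have "kb_code k u \<le> kb_code k v" "kb_code k v \<le> kb_code k u"
    using cell_index_le_iff[OF u v] cell_index_le_iff[OF v u] by simp_all
  then show "u = v"
    using kb_le_if_kb_code_le[OF u v] kb_le_if_kb_code_le[OF v u] kb_le_antisym by blast
qed

lemma cell_node_cell_index: "v \<in> nodes k \<Longrightarrow> cell_node k (cell_index k v) = v"
  by (simp add: cell_node_def the_inv_into_f_f inj_on_cell_index)

lemma cell_node_props:
  "r \<in> cell_index k ` nodes k \<Longrightarrow> cell_node k r \<in> nodes k \<and> cell_index k (cell_node k r) = r"
  by (simp add: cell_node_def the_inv_into_into f_the_inv_into_f inj_on_cell_index)

text \<open>The number of zeros before the heads of the cell of v at stage k.\<close>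
definition cell_level :: "nat \<Rightarrow> nat list \<Rightarrow> nat" where
  "cell_level k v = stage_zeros k + Suc (cell_index k v) * cell_zeros k"

lemma cell_level_le_stage_zeros_Suc: "cell_level k v \<le> stage_zeros (Suc k)"
proof -
  have "Suc (cell_index k v) * cell_zeros k \<le> num_cells k * cell_zeros k"
    using cell_index_less[of k v] by (intro mult_right_mono) auto
  then show ?thesis
    unfolding cell_level_def stage_zeros_Suc_cells by simp
qed

lemma stage_zeros_less_cell_level: "stage_zeros k < cell_level k v"
  by (simp add: cell_level_def cell_zeros_def)

text \<open>Half b of a cell offers the node v at stage k as the continuation of the node prev_node b v
  guessed at stage k - 1: v itself (b = False) or its parent (b = True). The pointer makes the
  counter drop by the difference of the two cell levels.\<close>
definition prev_node :: "bool \<Rightarrow> nat list \<Rightarrow> nat list" where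
  "prev_node b v = (if b then butlast v else v)"

definition fits :: "nat \<Rightarrow> nat list \<Rightarrow> bool \<Rightarrow> bool" where
  "fits k v b \<longleftrightarrow>
     (if b then 0 < k \<and> v \<noteq> [] \<and> butlast v \<in> nodes (k - 1) else k = 0 \<or> v \<in> nodes (k - 1))"

definition ptr_len :: "nat \<Rightarrow> nat list \<Rightarrow> bool \<Rightarrow> nat" where
  "ptr_len k v b = cell_level k v - (if k = 0 then 0 else cell_level (k - 1) (prev_node b v))"

definition head_letter :: "bool \<Rightarrow> nat" where
  "head_letter b = (if b then 3 else 2)"

definition half_letter :: "nat list set \<Rightarrow> nat \<Rightarrow> nat \<Rightarrow> bool \<Rightarrow> nat \<Rightarrow> nat" where
  "half_letter T k r b j =
     (if r \<in> cell_index k ` nodes k \<and> fits k (cell_node k r) b then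
        if j = 0 then (if cell_node k r \<in> T then head_letter b else 5)
        else if j \<le> ptr_len k (cell_node k r) b then 1 else 5
      else 5)"

definition cell_letter :: "nat list set \<Rightarrow> nat \<Rightarrow> nat \<Rightarrow> nat \<Rightarrow> nat" where
  "cell_letter T k r q =
     (if q < cell_zeros k then 0
      else if q - cell_zeros k \<le> max_ptr k then half_letter T k r False (q - cell_zeros k)
      else half_letter T k r True (q - cell_zeros k - Suc (max_ptr k)))"

definition tree_word :: "nat list set \<Rightarrow> nat \<Rightarrow> nat" where
  "tree_word T n =
     (let k = stage_of n; ofs = n - stage_start k in
      if ofs < num_cells k * cell_len k
      then cell_letter T k (ofs div cell_len k) (ofs mod cell_len k) else 4)"

definition head_pos :: "nat \<Rightarrow> nat \<Rightarrow> bool \<Rightarrow> nat" where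
  "head_pos k r b =
     stage_start k + r * cell_len k + cell_zeros k + (if b then Suc (max_ptr k) else 0)"

lemma ptr_len_le: "ptr_len k v b \<le> max_ptr k"
  using cell_level_le_stage_zeros_Suc[of k v] by (simp add: ptr_len_def max_ptr_def)

lemma head_pos_ptr_le_stage_end:
  assumes "r < num_cells k"
  shows "head_pos k r b + Suc (ptr_len k v b) \<le> stage_end k"
proof -
  have "head_pos k r b + Suc (ptr_len k v b) \<le> stage_start k + (r * cell_len k + cell_len k)"
    using ptr_len_le[of k v b] by (auto simp: head_pos_def cell_len_def)
  also have "\<dots> \<le> stage_end k"
    using cell_offset_le_stage[OF assms, of "cell_len k"] by simp
  finally show ?thesis .
qed

lemma tree_word_range: "tree_word T n \<in> {0,1,2,3,4,5}"
  by (simp add: tree_word_def Let_def cell_letter_def half_letter_def head_letter_def)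

lemma tree_word_stage:
  assumes "ofs \<le> num_cells k * cell_len k"
  shows "tree_word T (stage_start k + ofs) =
    (if ofs < num_cells k * cell_len k
     then cell_letter T k (ofs div cell_len k) (ofs mod cell_len k) else 4)"
proof -
  have "stage_of (stage_start k + ofs) = k"
    using assms by (intro stage_of_eqI) auto
  then show ?thesis
    by (simp add: tree_word_def)
qed

lemma tree_word_stage_end: "tree_word T (stage_end k) = 4"
  using tree_word_stage[of "num_cells k * cell_len k" k T] by simp

lemma cell_letter_not_4: "cell_letter T k r q \<noteq> 4"
  by (simp add: cell_letter_def half_letter_def head_letter_def)

lemma tree_word_inside_stage:
  assumes "stage_start k \<le> n" "n < stage_end k"
  shows "tree_word T n \<noteq> 4"
proof -
  have "n - stage_start k < num_cells k * cell_len k"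
    using assms by linarith
  then show ?thesis
    using tree_word_stage[of "n - stage_start k" k T] assms(1) cell_letter_not_4 by simp
qed

lemma tree_word_cell:
  assumes "r < num_cells k" "q < cell_len k"
  shows "tree_word T (stage_start k + r * cell_len k + q) = cell_letter T k r q"
proof -
  have "r * cell_len k + q < Suc r * cell_len k"
    using assms(2) by simp
  also have "\<dots> \<le> num_cells k * cell_len k"
    using assms(1) by (intro mult_right_mono) auto
  finally show ?thesis
    using tree_word_stage[of "r * cell_len k + q" k T] assms(2) by (simp add: add.assoc)
qed

lemma tree_word_half:
  assumes "r < num_cells k" "j \<le> max_ptr k"
  shows "tree_word T (head_pos k r b + j) = half_letter T k r b j"
proof -
  define q where "q = cell_zeros k + (if b then Suc (max_ptr k) else 0) + j"
  have q: "q < cell_len k"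
    using assms(2) by (auto simp: q_def cell_len_def)
  have "head_pos k r b + j = stage_start k + r * cell_len k + q"
    by (simp add: head_pos_def q_def)
  then have "tree_word T (head_pos k r b + j) = cell_letter T k r q"
    using tree_word_cell[OF assms(1) q] by simp
  also have "\<dots> = half_letter T k r b j"
    using assms(2) by (cases b) (auto simp: q_def cell_letter_def)
  finally show ?thesis .
qed

lemma tree_word_after_ptr:
  assumes "r < num_cells k"
  shows "tree_word T (head_pos k r b + Suc (ptr_len k (cell_node k r) b)) \<noteq> 1"
proof (cases "ptr_len k (cell_node k r) b < max_ptr k")
  case True
  then show ?thesis
    using tree_word_half[OF assms, of "Suc (ptr_len k (cell_node k r) b)"]
    by (simp add: half_letter_def)
next
  case False
  then have ptr: "ptr_len k (cell_node k r) b = max_ptr k"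
    using ptr_len_le le_antisym not_less by blast
  show ?thesis
  proof (cases b)
    case False
    then have "head_pos k r b + Suc (ptr_len k (cell_node k r) b) = head_pos k r True + 0"
      using ptr by (simp add: head_pos_def)
    then show ?thesis
      using tree_word_half[OF assms, of 0 T True] by (simp add: half_letter_def head_letter_def)
  next
    case True
    then have pos:
      "head_pos k r b + Suc (ptr_len k (cell_node k r) b) = stage_start k + Suc r * cell_len k"
      using ptr by (simp add: head_pos_def cell_len_def)
    show ?thesis
    proof (cases "Suc r < num_cells k")
      case True
      then show ?thesis
        using tree_word_cell[OF True, of 0 T] pos cell_zeros_pos[of k]
        by (simp add: cell_letter_def cell_len_def)
    next
      case False
      then have "Suc r = num_cells k"
        using assms by simp
      then show ?thesis
        using pos tree_word_stage_end[of T k] by simp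
    qed
  qed
qed

lemma half_letter_head: "half_letter T k r b j \<in> {2,3} \<Longrightarrow> j = 0"
  by (auto simp: half_letter_def split: if_splits)

lemma cell_letter_head:
  assumes "cell_letter T k r q \<in> {2,3}"
  obtains b where "q = cell_zeros k + (if b then Suc (max_ptr k) else 0)"
    and "half_letter T k r b 0 \<in> {2,3}"
proof (cases "q - cell_zeros k \<le> max_ptr k")
  case True
  with assms have "cell_zeros k \<le> q" "half_letter T k r False (q - cell_zeros k) \<in> {2,3}"
    by (auto simp: cell_letter_def split: if_splits)
  then show ?thesis
    using half_letter_head[of T k r False "q - cell_zeros k"] that[of False] by simp
next
  case False
  with assms have "half_letter T k r True (q - cell_zeros k - Suc (max_ptr k)) \<in> {2,3}"
    by (auto simp: cell_letter_def split: if_splits)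
  with False show ?thesis
    using half_letter_head[of T k r True "q - cell_zeros k - Suc (max_ptr k)"] that[of True] by simp
qed

lemma tree_word_head_cases:
  assumes "stage_start k \<le> n" "n < stage_end k" "tree_word T n \<in> {2,3}"
  obtains r b where "r \<in> cell_index k ` nodes k" "n = head_pos k r b" "fits k (cell_node k r) b"
    "cell_node k r \<in> T" "tree_word T n = head_letter b"
    "r = (n - stage_start k) div cell_len k" "b \<longleftrightarrow> tree_word T n = 3"
proof -
  define r where "r = (n - stage_start k) div cell_len k"
  define q where "q = (n - stage_start k) mod cell_len k"
  have "r < num_cells k"
    using assms(1,2) by (simp add: r_def less_mult_imp_div_less)
  have "q < cell_len k"
    using cell_zeros_pos[of k] by (simp add: q_def cell_len_def)
  have n: "n = stage_start k + r * cell_len k + q"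
    using assms(1) by (simp add: r_def q_def)
  then have "cell_letter T k r q \<in> {2,3}"
    using assms(3) tree_word_cell[OF \<open>r < num_cells k\<close> \<open>q < cell_len k\<close>] by simp
  then obtain b where q: "q = cell_zeros k + (if b then Suc (max_ptr k) else 0)"
    and half: "half_letter T k r b 0 \<in> {2,3}"
    using cell_letter_head by blast
  from n q have n: "n = head_pos k r b"
    by (simp add: head_pos_def)
  from half have head: "r \<in> cell_index k ` nodes k" "fits k (cell_node k r) b" "cell_node k r \<in> T"
    by (auto simp: half_letter_def split: if_splits)
  moreover have letter: "tree_word T n = head_letter b"
  proof -
    have "tree_word T n = half_letter T k r b 0"
      unfolding n using tree_word_half[OF \<open>r < num_cells k\<close>, of 0 T b] by simp
    also have "\<dots> = head_letter b"
      using head by (simp add: half_letter_def)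
    finally show ?thesis .
  qed
  moreover have "b \<longleftrightarrow> tree_word T n = 3"
    unfolding letter by (simp add: head_letter_def)
  ultimately show ?thesis
    using that n r_def by blast
qed

definition zero_count :: "nat list set \<Rightarrow> nat \<Rightarrow> nat" where
  "zero_count T n = card {i. i < n \<and> tree_word T i = 0}"

lemma zero_count_0: "zero_count T 0 = 0"
  by (simp add: zero_count_def)

lemma zero_count_Suc: "zero_count T (Suc n) = zero_count T n + (if tree_word T n = 0 then 1 else 0)"
proof -
  have "{i. i < Suc n \<and> tree_word T i = 0} =
      {i. i < n \<and> tree_word T i = 0} \<union> (if tree_word T n = 0 then {n} else {})"
    by (auto simp: less_Suc_eq)
  then show ?thesis
    by (simp add: zero_count_def)
qed

lemma zero_count_mono: "m \<le> n \<Longrightarrow> zero_count T m \<le> zero_count T n"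
  unfolding zero_count_def by (intro card_mono) auto

lemma zero_count_in_stage:
  assumes base: "zero_count T (stage_start k) = stage_zeros k" and "ofs \<le> num_cells k * cell_len k"
  shows "zero_count T (stage_start k + ofs) =
    stage_zeros k + ofs div cell_len k * cell_zeros k + min (ofs mod cell_len k) (cell_zeros k)"
  using assms(2)
proof (induction ofs)
  case (Suc ofs)
  then have "tree_word T (stage_start k + ofs) = 0 \<longleftrightarrow> ofs mod cell_len k < cell_zeros k"
    using tree_word_stage[of ofs k T] by (simp add: cell_letter_def half_letter_def head_letter_def)
  then have step: "zero_count T (stage_start k + Suc ofs) =
      zero_count T (stage_start k + ofs) + (if ofs mod cell_len k < cell_zeros k then 1 else 0)"
    using zero_count_Suc[of T "stage_start k + ofs"] by simp
  have IH: "zero_count T (stage_start k + ofs) =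
      stage_zeros k + ofs div cell_len k * cell_zeros k + min (ofs mod cell_len k) (cell_zeros k)"
    using Suc by simp
  have zeros: "cell_zeros k < cell_len k"
    by (simp add: cell_len_def)
  show ?case
  proof (cases "Suc (ofs mod cell_len k) = cell_len k")
    case True
    then have "Suc ofs mod cell_len k = 0" "Suc ofs div cell_len k = Suc (ofs div cell_len k)"
      by (simp_all add: mod_Suc div_Suc)
    then show ?thesis
      using step IH True zeros by simp
  next
    case False
    then have "Suc ofs mod cell_len k = Suc (ofs mod cell_len k)"
      and "Suc ofs div cell_len k = ofs div cell_len k"
      by (simp_all add: mod_Suc div_Suc)
    then show ?thesis
      using step IH by (auto simp: min_def)
  qed
qed (simp add: base)

lemma zero_count_stage_start: "zero_count T (stage_start k) = stage_zeros k"
proof (induction k)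
  case (Suc k)
  have "0 < cell_len k"
    by (simp add: cell_len_def)
  then have "zero_count T (stage_end k) = stage_zeros k + num_cells k * cell_zeros k"
    using zero_count_in_stage[OF Suc, of "num_cells k * cell_len k"] by simp
  then show ?case
    using zero_count_Suc[of T "stage_end k"] tree_word_stage_end[of T k]
    by (simp add: cell_zeros_def)
qed (simp add: zero_count_0)

lemma zero_count_head:
  assumes "r < num_cells k" "j \<le> Suc (max_ptr k)"
  shows "zero_count T (head_pos k r b + j) = stage_zeros k + Suc r * cell_zeros k"
proof -
  define q where "q = cell_zeros k + (if b then Suc (max_ptr k) else 0) + j"
  have "q \<le> cell_len k" "cell_zeros k \<le> q"
    using assms(2) by (auto simp: q_def cell_len_def)
  moreover have "head_pos k r b + j = stage_start k + (r * cell_len k + q)"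
    by (simp add: head_pos_def q_def)
  ultimately show ?thesis
    using zero_count_in_stage[OF zero_count_stage_start cell_offset_le_stage[OF assms(1)], of q T]
    by (cases "q = cell_len k") (auto simp: min_def)
qed

lemma zero_count_head_pos:
  "cell_index k v = r \<Longrightarrow> zero_count T (head_pos k r b) = cell_level k v"
  using zero_count_head[of r k 0 T b] cell_index_less[of k v] by (simp add: cell_level_def)

section \<open>Runs along infinite branches\<close>

fun branch_depth :: "(nat \<Rightarrow> nat) \<Rightarrow> nat \<Rightarrow> nat" where
  "branch_depth z 0 = 0"
| "branch_depth z (Suc k) =
     (if z (branch_depth z k) < Suc k then Suc (branch_depth z k) else branch_depth z k)"

definition branch_node :: "(nat \<Rightarrow> nat) \<Rightarrow> nat \<Rightarrow> nat list" where
  "branch_node z k = map z [0..<branch_depth z k]"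

definition branch_grows :: "(nat \<Rightarrow> nat) \<Rightarrow> nat \<Rightarrow> bool" where
  "branch_grows z k \<longleftrightarrow> 0 < k \<and> branch_depth z k = Suc (branch_depth z (k - 1))"

definition branch_head :: "(nat \<Rightarrow> nat) \<Rightarrow> nat \<Rightarrow> nat" where
  "branch_head z k = head_pos k (cell_index k (branch_node z k)) (branch_grows z k)"

definition branch_ptr :: "(nat \<Rightarrow> nat) \<Rightarrow> nat \<Rightarrow> nat" where
  "branch_ptr z k = ptr_len k (branch_node z k) (branch_grows z k)"

definition branch_spent :: "(nat \<Rightarrow> nat) \<Rightarrow> nat \<Rightarrow> nat" where
  "branch_spent z k = (if k = 0 then 0 else cell_level (k - 1) (branch_node z (k - 1)))"

lemma branch_node_nodes: "branch_node z k \<in> nodes k"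
proof -
  have "branch_depth z k \<le> k \<and> (\<forall>i<branch_depth z k. z i < k)"
    by (induction k) (auto simp: less_Suc_eq)
  then show ?thesis
    by (auto simp: branch_node_def nodes_def)
qed

lemma prev_node_branch_node:
  "0 < k \<Longrightarrow> prev_node (branch_grows z k) (branch_node z k) = branch_node z (k - 1)"
  by (cases k)
    (auto simp: prev_node_def branch_grows_def branch_node_def butlast_conv_take take_map)

lemma fits_branch_node: "fits k (branch_node z k) (branch_grows z k)"
proof (cases k)
  case (Suc m)
  then have "branch_grows z k \<Longrightarrow> branch_node z k \<noteq> []"
    by (auto simp: branch_grows_def branch_node_def)
  then show ?thesis
    using prev_node_branch_node[of k z] branch_node_nodes[of z m] Suc
    by (auto simp: fits_def prev_node_def)
qed (simp add: fits_def branch_grows_def)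

lemma cell_node_branch_node: "cell_node k (cell_index k (branch_node z k)) = branch_node z k"
  using cell_node_cell_index[OF branch_node_nodes] .

lemma branch_spent_le: "branch_spent z k \<le> stage_zeros k"
  using cell_level_le_stage_zeros_Suc[of "k - 1"] by (cases k) (simp_all add: branch_spent_def)

lemma branch_ptr_eq: "branch_ptr z k = cell_level k (branch_node z k) - branch_spent z k"
  using prev_node_branch_node[of k z] by (simp add: branch_ptr_def branch_spent_def ptr_len_def)

lemma branch_spent_Suc: "branch_spent z (Suc k) = branch_spent z k + branch_ptr z k"
  using branch_ptr_eq[of z k] branch_spent_le[of z k]
    stage_zeros_less_cell_level[of k "branch_node z k"]
  by (simp add: branch_spent_def)

lemma branch_ptr_end: "branch_head z k + Suc (branch_ptr z k) \<le> stage_end k"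
  using head_pos_ptr_le_stage_end[OF cell_index_less] by (simp add: branch_head_def branch_ptr_def)

lemma stage_of_branch_head:
  "j \<le> Suc (branch_ptr z k) \<Longrightarrow> stage_of (branch_head z k + j) = k"
  using branch_ptr_end[of z k] by (intro stage_of_eqI) (auto simp: branch_head_def head_pos_def)

lemma zero_count_branch_head: "zero_count T (branch_head z k) = cell_level k (branch_node z k)"
  by (simp add: branch_head_def zero_count_head_pos)

lemma infinite_branch_grows: "infinite {k. branch_grows z k}"
proof
  assume "finite {k. branch_grows z k}"
  then obtain K where K: "\<And>k. K \<le> k \<Longrightarrow> \<not> branch_grows z k"
    by (metis finite_nat_set_iff_bounded_le mem_Collect_eq not_less_eq_eq)
  have const: "branch_depth z k = branch_depth z K" if "K \<le> k" for k
    using that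
  proof (induction k rule: dec_induct)
    case (step k)
    then show ?case
      using K[of "Suc k"] by (auto simp: branch_grows_def)
  qed simp
  let ?k = "K + z (branch_depth z K)"
  have "branch_depth z (Suc ?k) = Suc (branch_depth z ?k)"
    using const[of ?k] by simp
  then show False
    using K[of "Suc ?k"] by (simp add: branch_grows_def)
qed

context
  fixes T :: "nat list set" and z :: "nat \<Rightarrow> nat"
  assumes branch: "\<And>d. map z [0..<d] \<in> T"
begin

lemma tree_word_branch:
  assumes "j \<le> branch_ptr z k"
  shows "tree_word T (branch_head z k + j) = (if j = 0 then head_letter (branch_grows z k) else 1)"
proof -
  have "j \<le> max_ptr k"
    using assms ptr_len_le[of k "branch_node z k"] by (simp add: branch_ptr_def) (meson order.trans)
  then have "tree_word T (branch_head z k + j) =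
      half_letter T k (cell_index k (branch_node z k)) (branch_grows z k) j"
    unfolding branch_head_def by (rule tree_word_half[OF cell_index_less])
  moreover have "branch_node z k \<in> T"
    using branch by (simp add: branch_node_def)
  ultimately show ?thesis
    using assms fits_branch_node[of k z] imageI[OF branch_node_nodes, of "cell_index k"]
    by (simp add: half_letter_def cell_node_branch_node branch_ptr_def)
qed

lemma tree_word_after_branch_ptr: "tree_word T (branch_head z k + Suc (branch_ptr z k)) \<noteq> 1"
  using tree_word_after_ptr[OF cell_index_less[of k "branch_node z k"],
      where T = T and b = "branch_grows z k"]
  by (simp add: branch_head_def branch_ptr_def cell_node_branch_node)

text \<open>The honest run guesses branch_node z k at every stage k. Its counter is the number of zeros
  read minus the pointer lengths consumed so far.\<close>
definition honest_state :: "nat \<Rightarrow> nat" where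
  "honest_state n =
     (let k = stage_of n; h = branch_head z k in
      if n \<le> h then 0
      else if n = Suc h then head_letter (branch_grows z k)
      else if n \<le> h + Suc (branch_ptr z k) then 2 else 1)"

definition honest_spent :: "nat \<Rightarrow> nat" where
  "honest_spent n =
     (let k = stage_of n in branch_spent z k + min (n - Suc (branch_head z k)) (branch_ptr z k))"

definition honest_counter :: "nat \<Rightarrow> nat" where
  "honest_counter n = zero_count T n - honest_spent n"

lemma honest_spent_le: "honest_spent n \<le> zero_count T n"
proof -
  define k where "k = stage_of n"
  show ?thesis
  proof (cases "n \<le> branch_head z k")
    case True
    then have "honest_spent n = branch_spent z k"
      by (simp add: honest_spent_def Let_def k_def[symmetric])
    also have "\<dots> \<le> zero_count T (stage_start k)"
      by (simp add: branch_spent_le zero_count_stage_start)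
    also have "\<dots> \<le> zero_count T n"
      using stage_of_bounds[of n] by (intro zero_count_mono) (simp add: k_def)
    finally show ?thesis .
  next
    case False
    have "honest_spent n \<le> branch_spent z k + branch_ptr z k"
      by (simp add: honest_spent_def Let_def k_def[symmetric])
    also have "\<dots> = zero_count T (branch_head z k)"
      using branch_spent_Suc[of z k] by (simp add: zero_count_branch_head branch_spent_def)
    also have "\<dots> \<le> zero_count T n"
      using False by (intro zero_count_mono) simp
    finally show ?thesis .
  qed
qed

lemma honest_counter_Suc:
  assumes "honest_spent (Suc n) = honest_spent n"
  shows "int (honest_counter (Suc n)) =
    int (honest_counter n) + (if tree_word T n = 0 then 1 else 0)"
  using assms honest_spent_le[of n] zero_count_Suc[of T n] by (simp add: honest_counter_def)

lemma honest_counter_Suc_ptr: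
  assumes "honest_spent (Suc n) = Suc (honest_spent n)" "tree_word T n = 1"
  shows "int (honest_counter (Suc n)) = int (honest_counter n) - 1"
  using assms honest_spent_le[of "Suc n"] zero_count_Suc[of T n] by (simp add: honest_counter_def)

abbreviation honest_moves :: "nat \<Rightarrow> bool" where
  "honest_moves n \<equiv> \<exists>d. (honest_state n, tree_word T n, d, honest_state (Suc n)) \<in> branch_trans \<and>
     int (honest_counter (Suc n)) = int (honest_counter n) + d"

lemma honest_moves_stage_end: "honest_moves (stage_end k)"
proof -
  let ?n = "stage_end k"
  have k: "stage_of ?n = k" "stage_of (Suc ?n) = Suc k"
    by (auto intro: stage_of_eqI)
  have "branch_head z k < ?n"
    using branch_ptr_end[of z k] by simp
  then have "honest_state ?n \<in> {1,2,3}"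
    using k by (auto simp: honest_state_def Let_def head_letter_def)
  moreover have "Suc ?n \<le> branch_head z (Suc k)"
    by (simp add: branch_head_def head_pos_def)
  then have "honest_state (Suc ?n) = 0" "honest_spent (Suc ?n) = honest_spent ?n"
    using k branch_ptr_end[of z k] branch_spent_Suc[of z k]
    by (simp_all add: honest_state_def honest_spent_def Let_def)
  ultimately show ?thesis
    using branch_trans_separator honest_counter_Suc[of ?n] tree_word_stage_end[of T k] by fastforce
qed

lemma honest_moves_to_ptr_end:
  assumes k: "stage_of n = k" "stage_of (Suc n) = k" and n: "n \<le> branch_head z k + branch_ptr z k"
  shows "honest_moves n"
proof -
  let ?h = "branch_head z k" and ?p = "branch_ptr z k"
  have state: "honest_state m =
      (if m \<le> ?h then 0 else if m = Suc ?h then head_letter (branch_grows z k)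
       else if m \<le> ?h + Suc ?p then 2 else 1)" if "stage_of m = k" for m
    using that by (simp add: honest_state_def Let_def)
  have spent: "honest_spent m = branch_spent z k + min (m - Suc ?h) ?p" if "stage_of m = k" for m
    using that by (simp add: honest_spent_def Let_def)
  consider (before) "n < ?h" | (head) "n = ?h" | (ptr) "?h < n"
    by linarith
  then show ?thesis
  proof cases
    case before
    have "stage_start k \<le> n"
      using stage_of_bounds[of n] k by simp
    moreover have "n < stage_end k"
      using before branch_ptr_end[of z k] by simp
    ultimately have "tree_word T n \<in> {0,1,2,3,5}"
      using tree_word_range[of T n] tree_word_inside_stage[of k n T] by auto
    then show ?thesis
      using before state[OF k(1)] state[OF k(2)] spent[OF k(1)] spent[OF k(2)]
        honest_counter_Suc[of n] branch_trans_count[of 0]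
      by auto
  next
    case head
    then have "tree_word T n = head_letter (branch_grows z k)"
      using tree_word_branch[of 0 k] by simp
    then show ?thesis
      using head state[OF k(1)] state[OF k(2)] spent[OF k(1)] spent[OF k(2)]
        honest_counter_Suc[of n] branch_trans_guess[of "branch_grows z k"]
      by (auto simp: head_letter_def)
  next
    case ptr
    then have "tree_word T n = 1"
      using tree_word_branch[of "n - ?h" k] n by simp
    moreover have "honest_state n \<in> {2,3}" "honest_state (Suc n) = 2"
      using ptr n state[OF k(1)] state[OF k(2)] by (auto simp: head_letter_def)
    moreover have "honest_spent (Suc n) = Suc (honest_spent n)"
      using ptr n spent[OF k(1)] spent[OF k(2)] by simp
    ultimately show ?thesis
      using honest_counter_Suc_ptr[of n] branch_trans_ptr by fastforce
  qed
qed

lemma honest_moves_after_ptr_end: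
  assumes k: "stage_of n = k" "stage_of (Suc n) = k" and n: "branch_head z k + branch_ptr z k < n"
  shows "honest_moves n"
proof -
  let ?h = "branch_head z k" and ?p = "branch_ptr z k"
  have "n < stage_end k"
    using stage_of_bounds[of "Suc n"] k(2) by simp
  then have letter: "tree_word T n \<in> {0,1,2,3,5}"
    using tree_word_range[of T n] tree_word_inside_stage[of k n T] stage_of_bounds[of n] k(1)
    by auto
  have same: "honest_spent (Suc n) = honest_spent n"
    using n k by (simp add: honest_spent_def Let_def)
  have next_state: "honest_state (Suc n) = 1"
    using n k(2) by (simp add: honest_state_def Let_def)
  show ?thesis
  proof (cases "n = ?h + Suc ?p")
    case True
    then have "honest_state n \<in> {2,3}" "tree_word T n \<noteq> 1"
      using k(1) tree_word_after_branch_ptr[of k]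
      by (simp_all add: honest_state_def Let_def head_letter_def)
    then show ?thesis
      using letter same next_state honest_counter_Suc[of n] branch_trans_leave_ptr by fastforce
  next
    case False
    then have "honest_state n = 1"
      using n k(1) by (simp add: honest_state_def Let_def)
    then show ?thesis
      using letter same next_state honest_counter_Suc[of n] branch_trans_count[of 1] by fastforce
  qed
qed

lemma honest_moves: "honest_moves n"
proof -
  define k where "k = stage_of n"
  have n: "stage_start k \<le> n" "n \<le> stage_end k"
    using stage_of_bounds[of n] by (simp_all add: k_def)
  show ?thesis
  proof (cases "n = stage_end k")
    case False
    with n have "stage_of (Suc n) = k"
      by (intro stage_of_eqI) simp_all
    then show ?thesis
      using honest_moves_to_ptr_end[of n k] honest_moves_after_ptr_end[of n k] k_def by fastforce
  qed (simp add: honest_moves_stage_end)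
qed

lemma tree_word_accepted: "tree_word T \<in> omega_lang branch_automaton"
proof -
  have run: "is_run branch_automaton (tree_word T) honest_state honest_counter"
    unfolding is_run_def
  proof (intro conjI allI)
    show "honest_state 0 = init branch_automaton"
      by (simp add: honest_state_def Let_def branch_automaton_def)
    show "honest_counter 0 = 0"
      by (simp add: honest_counter_def zero_count_0)
    show "\<exists>d. (honest_state i, tree_word T i, d, honest_state (Suc i)) \<in> trans branch_automaton \<and>
        int (honest_counter (Suc i)) = int (honest_counter i) + d" for i
      using honest_moves[of i] by (simp add: branch_automaton_def)
  qed
  have "honest_state (Suc (branch_head z k)) = 3" if "branch_grows z k" for k
    using stage_of_branch_head[of 1 z k] that
    by (simp add: honest_state_def Let_def head_letter_def)
  then have "(\<lambda>k. Suc (branch_head z k)) ` {k. branch_grows z k} \<subseteq>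
      {i. honest_state i \<in> final branch_automaton}"
    by (auto simp: branch_automaton_def)
  moreover have "inj (\<lambda>k. Suc (branch_head z k))"
    by (rule injI) (metis Suc_inject add_0_right zero_le stage_of_branch_head)
  then have "infinite ((\<lambda>k. Suc (branch_head z k)) ` {k. branch_grows z k})"
    using infinite_branch_grows by (simp add: finite_image_iff inj_on_subset)
  ultimately have "infinite {i. honest_state i \<in> final branch_automaton}"
    using finite_subset by blast
  moreover have "\<forall>n. tree_word T n \<in> alph branch_automaton"
    using tree_word_range by (simp add: branch_automaton_def)
  ultimately show ?thesis
    using run by (auto simp: omega_lang_def)
qed

end

section \<open>Infinite branches from accepting runs\<close>

lemma eventually_constant_if_decreasing:
  fixes f :: "nat \<Rightarrow> nat"
  assumes "\<And>k. K \<le> k \<Longrightarrow> f (Suc k) \<le> f k"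
  shows "\<exists>K'\<ge>K. \<forall>k\<ge>K'. f k = f K'"
proof -
  define m where "m = (LEAST x. \<exists>k\<ge>K. f k = x)"
  have "\<exists>k\<ge>K. f k = m"
    unfolding m_def by (rule LeastI[of _ "f K"]) auto
  then obtain K' where K': "K \<le> K'" "f K' = m"
    by blast
  have "m \<le> f k" if "K \<le> k" for k
    unfolding m_def using that by (intro Least_le) auto
  moreover have "f k \<le> f K'" if "K' \<le> k" for k
    using that
  proof (induction k rule: dec_induct)
    case (step k)
    then show ?case
      using assms[of k] K'(1) by simp
  qed simp
  ultimately show ?thesis
    using K' by (metis le_antisym order.trans)
qed

text \<open>A sequence of finite sequences that descends in the Kleene-Brouwer order and changes
  infinitely often converges to an infinite sequence: each of its prefixes is eventually stable.\<close>
locale kb_descending =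
  fixes s :: "nat \<Rightarrow> nat list"
  assumes descending: "\<And>k. kb_le (s (Suc k)) (s k)"
    and changes: "infinite {k. s (Suc k) \<noteq> s k}"
begin

definition stable_prefix :: "nat list \<Rightarrow> bool" where
  "stable_prefix c \<longleftrightarrow> (\<forall>\<^sub>F k in sequentially. take (length c) (s k) = c)"

lemma stable_prefix_eventually_longer:
  assumes "stable_prefix c"
  shows "\<forall>\<^sub>F k in sequentially. length c < length (s k)"
proof -
  let ?d = "length c"
  obtain K where K: "\<And>k. K \<le> k \<Longrightarrow> take ?d (s k) = c"
    using assms unfolding stable_prefix_def eventually_sequentially by blast
  have "\<exists>K'\<ge>K. ?d < length (s K')"
  proof (rule ccontr)
    assume short: "\<not> (\<exists>K'\<ge>K. ?d < length (s K'))"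
    have stable: "s k = c" if "K \<le> k" for k
    proof -
      have "length (s k) \<le> ?d"
        using short that not_less by blast
      then show ?thesis
        using K[OF that] take_all by metis
    qed
    have "k < K" if "s (Suc k) \<noteq> s k" for k
    proof (rule ccontr)
      assume "\<not> k < K"
      then show False
        using that stable[of k] stable[of "Suc k"] by simp
    qed
    then have "{k. s (Suc k) \<noteq> s k} \<subseteq> {..<K}"
      by blast
    then have "finite {k. s (Suc k) \<noteq> s k}"
      by (rule finite_subset) simp
    with changes show False
      by contradiction
  qed
  then obtain K' where K': "K \<le> K'" "?d < length (s K')"
    by blast
  have "?d < length (s k)" if "K' \<le> k" for k
    using that
  proof (induction k rule: dec_induct)
    case (step k)
    then have "take ?d (s (Suc k)) = take ?d (s k)"
      using K K'(1) by simp
    then show ?case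
      using kb_leD[OF descending] step.IH by blast
  qed (use K' in simp)
  then show ?thesis
    unfolding eventually_sequentially by blast
qed

text \<open>Once its prefix c is stable, the next entry of s k can only decrease.\<close>
lemma stable_prefix_snoc:
  assumes "stable_prefix c"
  obtains x where "stable_prefix (c @ [x])"
proof -
  let ?d = "length c"
  obtain K where K: "\<And>k. K \<le> k \<Longrightarrow> take ?d (s k) = c \<and> ?d < length (s k)"
    using eventually_conj[OF assms[unfolded stable_prefix_def]
        stable_prefix_eventually_longer[OF assms]]
    unfolding eventually_sequentially by blast
  have decreasing: "s (Suc k) ! ?d \<le> s k ! ?d" if "K \<le> k" for k
  proof -
    have "take ?d (s (Suc k)) = take ?d (s k)"
      using K that by simp
    then show ?thesis
      using kb_leD[OF descending[of k]] K[OF that] by blast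
  qed
  obtain K' where K': "K \<le> K'" "\<And>k. K' \<le> k \<Longrightarrow> s k ! ?d = s K' ! ?d"
    using eventually_constant_if_decreasing[of K "\<lambda>k. s k ! ?d", OF decreasing] by blast
  have "take (Suc ?d) (s k) = c @ [s K' ! ?d]" if "K' \<le> k" for k
    using K[of k] K'(1) K'(2)[OF that] that by (simp add: take_Suc_conv_app_nth)
  then have "stable_prefix (c @ [s K' ! ?d])"
    unfolding stable_prefix_def eventually_sequentially by auto
  then show ?thesis
    using that by blast
qed

fun limit_prefix :: "nat \<Rightarrow> nat list" where
  "limit_prefix 0 = []"
| "limit_prefix (Suc d) = limit_prefix d @ [SOME x. stable_prefix (limit_prefix d @ [x])]"

lemma stable_limit_prefix: "stable_prefix (limit_prefix d)"
proof (induction d)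
  case (Suc d)
  obtain x where "stable_prefix (limit_prefix d @ [x])"
    using stable_prefix_snoc[OF Suc.IH] .
  then show ?case
    using someI[of "\<lambda>x. stable_prefix (limit_prefix d @ [x])" x] by simp
qed (simp add: stable_prefix_def)

lemma limit_branch: "\<exists>b. \<forall>d. \<forall>\<^sub>F k in sequentially. take d (s k) = map b [0..<d]"
proof -
  define b where "b d = last (limit_prefix (Suc d))" for d
  have "limit_prefix d = map b [0..<d]" for d
    by (induction d) (simp_all add: b_def)
  then have "\<forall>\<^sub>F k in sequentially. take d (s k) = map b [0..<d]" for d
    using stable_limit_prefix[of d] by (simp add: stable_prefix_def)
  then show ?thesis
    by blast
qed

end

context
  fixes T :: "nat list set" and q c :: "nat \<Rightarrow> nat"
  assumes run: "is_run branch_automaton (tree_word T) q c"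
begin

lemma run_step:
  "\<exists>d. (q n, tree_word T n, d, q (Suc n)) \<in> branch_trans \<and> int (c (Suc n)) = int (c n) + d"
  using run by (simp add: is_run_def branch_automaton_def)

lemma run_init: "q 0 = 0" "c 0 = 0"
  using run by (simp_all add: is_run_def branch_automaton_def)

lemma run_separator: "tree_word T n = 4 \<Longrightarrow> q n \<noteq> 0 \<and> q (Suc n) = 0"
  using run_step[of n] by (auto simp: branch_trans_def)

lemma run_stays_nonzero: "q n \<noteq> 0 \<Longrightarrow> tree_word T n \<noteq> 4 \<Longrightarrow> q (Suc n) \<noteq> 0"
  using run_step[of n] by (auto simp: branch_trans_def)

lemma run_leaves_0: "q n = 0 \<Longrightarrow> q (Suc n) \<noteq> 0 \<Longrightarrow> tree_word T n \<in> {2,3} \<and> q (Suc n) = tree_word T n"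
  using run_step[of n] by (auto simp: branch_trans_def)

lemma run_enters_3: "q (Suc n) = 3 \<Longrightarrow> q n = 0 \<and> tree_word T n = 3"
  using run_step[of n] by (auto simp: branch_trans_def)

lemma run_ptr: "q n \<in> {2,3} \<Longrightarrow> tree_word T n = 1 \<Longrightarrow> q (Suc n) = 2 \<and> c (Suc n) + 1 = c n"
  using run_step[of n] by (auto simp: branch_trans_def)

lemma run_counter:
  "\<not> (q n \<in> {2,3} \<and> tree_word T n = 1) \<Longrightarrow> c (Suc n) = c n + (if tree_word T n = 0 then 1 else 0)"
  using run_step[of n] tree_word_range[of T n] by (auto simp: branch_trans_def)

lemma run_stays_1: "q n = 1 \<Longrightarrow> tree_word T n \<noteq> 4 \<Longrightarrow> q (Suc n) = 1"
  using run_step[of n] by (auto simp: branch_trans_def)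

lemma run_after_ptr: "q n \<in> {2,3} \<Longrightarrow> tree_word T n \<noteq> 1 \<Longrightarrow> q (Suc n) \<in> {0,1}"
  using run_step[of n] by (auto simp: branch_trans_def)

lemma counter_le_zero_count: "c n \<le> zero_count T n"
proof (induction n)
  case (Suc n)
  then show ?case
    using run_ptr[of n] run_counter[of n] zero_count_Suc[of T n]
    by (cases "q n \<in> {2,3} \<and> tree_word T n = 1") auto
qed (simp add: run_init zero_count_0)

lemma counter_no_decrement:
  assumes "a \<le> b" "\<And>j. a \<le> j \<Longrightarrow> j < b \<Longrightarrow> \<not> (q j \<in> {2,3} \<and> tree_word T j = 1)"
  shows "c b + zero_count T a = c a + zero_count T b"
  using assms
proof (induction b rule: dec_induct)
  case (step b)
  then show ?case
    using run_counter[of b] zero_count_Suc[of T b] by simp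
qed simp

lemma run_stage_start: "q (stage_start k) = 0"
  using run_init run_separator[of "stage_end (k - 1)"] tree_word_stage_end[of T "k - 1"]
  by (cases k) simp_all

lemma run_nonzero_after:
  assumes "stage_start k \<le> l" "q (Suc l) \<noteq> 0" "Suc l \<le> j" "j \<le> stage_end k"
  shows "q j \<noteq> 0"
  using assms(3,4)
proof (induction j rule: dec_induct)
  case (step j)
  then show ?case
    using run_stays_nonzero[of j] tree_word_inside_stage[of k j T] assms(1) by simp
qed (use assms(2) in simp)

definition guess_pos :: "nat \<Rightarrow> nat" where
  "guess_pos k = (LEAST l. stage_start k \<le> l \<and> q (Suc l) \<noteq> 0)"

lemma guess_pos_props:
  "stage_start k \<le> guess_pos k \<and> guess_pos k < stage_end k \<and>
    q (guess_pos k) = 0 \<and> q (Suc (guess_pos k)) \<noteq> 0"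
proof -
  let ?P = "\<lambda>l. stage_start k \<le> l \<and> q (Suc l) \<noteq> 0"
  have nonempty: "stage_start k < stage_end k"
    using num_cells_pos[of k] by (simp add: cell_len_def)
  then have "Suc (stage_end k - 1) = stage_end k" "stage_start k \<le> stage_end k - 1"
    by linarith+
  then have "?P (stage_end k - 1)"
    using run_separator[of "stage_end k"] tree_word_stage_end[of T k] by simp
  then have P: "?P (guess_pos k)" and "guess_pos k \<le> stage_end k - 1"
    unfolding guess_pos_def by (rule LeastI, rule Least_le)
  then have "guess_pos k < stage_end k"
    using nonempty by linarith
  moreover have "q (guess_pos k) = 0"
  proof (cases "guess_pos k = stage_start k")
    case False
    then obtain m where m: "guess_pos k = Suc m" "stage_start k \<le> m"
      using P by (cases "guess_pos k") auto
    then have "m < guess_pos k"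
      by simp
    then have "\<not> ?P m"
      unfolding guess_pos_def by (rule not_less_Least)
    with m show ?thesis
      by simp
  qed (simp add: run_stage_start)
  ultimately show ?thesis
    using P by blast
qed

lemma run_zero_before_guess: "stage_start k \<le> j \<Longrightarrow> j \<le> guess_pos k \<Longrightarrow> q j = 0"
proof (induction j rule: dec_induct)
  case (step j)
  then have "j < guess_pos k"
    by simp
  then have "\<not> (stage_start k \<le> j \<and> q (Suc j) \<noteq> 0)"
    unfolding guess_pos_def by (rule not_less_Least)
  then show ?case
    using step by simp
qed (simp add: run_stage_start)

lemma guess_pos_unique:
  assumes "stage_start k \<le> l" "l < stage_end k" "q l = 0" "q (Suc l) \<noteq> 0"
  shows "l = guess_pos k"
proof -
  have "guess_pos k \<le> l"
    unfolding guess_pos_def using assms(1,4) by (intro Least_le) simp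
  moreover have "\<not> guess_pos k < l"
    using run_nonzero_after[of k "guess_pos k" l] guess_pos_props[of k] assms(2,3)
    by (auto simp: Suc_le_eq)
  ultimately show ?thesis
    by simp
qed

definition guess_grows :: "nat \<Rightarrow> bool" where
  "guess_grows k \<longleftrightarrow> tree_word T (guess_pos k) = 3"

definition guess_cell :: "nat \<Rightarrow> nat" where
  "guess_cell k = (guess_pos k - stage_start k) div cell_len k"

definition guess_node :: "nat \<Rightarrow> nat list" where
  "guess_node k = cell_node k (guess_cell k)"

definition guess_parent :: "nat \<Rightarrow> nat list" where
  "guess_parent k = prev_node (guess_grows k) (guess_node k)"

abbreviation guess_ptr :: "nat \<Rightarrow> nat" where
  "guess_ptr k \<equiv> ptr_len k (guess_node k) (guess_grows k)"

abbreviation guess_ptr_end :: "nat \<Rightarrow> nat" where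
  "guess_ptr_end k \<equiv> Suc (guess_pos k) + guess_ptr k"

lemma guess_head:
  "guess_cell k \<in> cell_index k ` nodes k" "guess_pos k = head_pos k (guess_cell k) (guess_grows k)"
  "fits k (guess_node k) (guess_grows k)" "guess_node k \<in> T"
proof -
  have "tree_word T (guess_pos k) \<in> {2,3}"
    using run_leaves_0 guess_pos_props[of k] by blast
  then obtain r b where "r \<in> cell_index k ` nodes k" "guess_pos k = head_pos k r b"
    "fits k (cell_node k r) b" "cell_node k r \<in> T" "r = guess_cell k" "b = guess_grows k"
    using tree_word_head_cases[of k "guess_pos k" T] guess_pos_props[of k]
    unfolding guess_cell_def guess_grows_def by metis
  then show "guess_cell k \<in> cell_index k ` nodes k"
    and "guess_pos k = head_pos k (guess_cell k) (guess_grows k)"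
    "fits k (guess_node k) (guess_grows k)" "guess_node k \<in> T"
    unfolding guess_node_def by simp_all
qed

lemma guess_node_nodes: "guess_node k \<in> nodes k" "cell_index k (guess_node k) = guess_cell k"
  using cell_node_props[OF guess_head(1)] unfolding guess_node_def by simp_all

lemma guess_cell_less: "guess_cell k < num_cells k"
  using guess_node_nodes(2)[of k] cell_index_less[of k "guess_node k"] by simp

lemma run_ptr_phase:
  "j \<le> guess_ptr k \<Longrightarrow>
    q (Suc (guess_pos k) + j) \<in> {2,3} \<and> c (Suc (guess_pos k) + j) + j = c (guess_pos k)"
proof (induction j)
  case 0
  have "tree_word T (guess_pos k) \<in> {2,3}" "q (Suc (guess_pos k)) \<in> {2,3}"
    using run_leaves_0[of "guess_pos k"] guess_pos_props[of k] by auto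
  then show ?case
    using run_counter[of "guess_pos k"] guess_pos_props[of k] by auto
next
  case (Suc j)
  have "Suc j \<le> max_ptr k"
    using Suc.prems ptr_len_le order.trans by blast
  then have "tree_word T (Suc (guess_pos k) + j) =
      half_letter T k (guess_cell k) (guess_grows k) (Suc j)"
    using tree_word_half[OF guess_cell_less] guess_head(2)[of k] by (metis add_Suc add_Suc_right)
  then have "tree_word T (Suc (guess_pos k) + j) = 1"
    using Suc.prems guess_head[of k] by (simp add: half_letter_def guess_node_def)
  then show ?case
    using run_ptr[of "Suc (guess_pos k) + j"] Suc by simp
qed

lemma guess_ptr_end_props:
  "q (guess_ptr_end k) \<in> {2,3}" "c (guess_ptr_end k) + guess_ptr k = c (guess_pos k)"
  "guess_ptr_end k \<le> stage_end k" "tree_word T (guess_ptr_end k) \<noteq> 1"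
proof -
  show "q (guess_ptr_end k) \<in> {2,3}" "c (guess_ptr_end k) + guess_ptr k = c (guess_pos k)"
    using run_ptr_phase[of "guess_ptr k" k] by auto
  show "guess_ptr_end k \<le> stage_end k"
    using head_pos_ptr_le_stage_end[OF guess_cell_less] guess_head(2)[of k]
    by (metis add_Suc add_Suc_right)
  show "tree_word T (guess_ptr_end k) \<noteq> 1"
    using tree_word_after_ptr[OF guess_cell_less, where T = T and b = "guess_grows k"]
      guess_head(2)[of k]
    by (simp add: guess_node_def)
qed

lemma run_after_guess_ptr: "Suc (guess_ptr_end k) \<le> j \<Longrightarrow> j \<le> stage_end k \<Longrightarrow> q j = 1"
proof (induction j rule: dec_induct)
  case base
  have "q (Suc (guess_ptr_end k)) \<noteq> 0"
    using run_nonzero_after[of k "guess_pos k" "Suc (guess_ptr_end k)"] guess_pos_props[of k] base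
    by simp
  then show ?case
    using run_after_ptr[of "guess_ptr_end k"] guess_ptr_end_props[of k] by simp
next
  case (step j)
  then show ?case
    using run_stays_1[of j] tree_word_inside_stage[of k j T] guess_pos_props[of k] by simp
qed

lemma run_no_decrement_between:
  assumes "guess_ptr_end k \<le> j" "j < guess_pos (Suc k)"
  shows "\<not> (q j \<in> {2,3} \<and> tree_word T j = 1)"
proof -
  consider "j = guess_ptr_end k"
    | "Suc (guess_ptr_end k) \<le> j" "j \<le> stage_end k"
    | "stage_start (Suc k) \<le> j"
    using assms(1) by fastforce
  then show ?thesis
  proof cases
    case 3
    then show ?thesis
      using run_zero_before_guess[of "Suc k" j] assms(2) by simp
  qed (use guess_ptr_end_props[of k] run_after_guess_ptr[of k j] in auto)
qed

lemma zero_count_guess_pos: "zero_count T (guess_pos k) = cell_level k (guess_node k)"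
  using zero_count_head_pos[OF guess_node_nodes(2)] guess_head(2)[of k] by simp

lemma zero_count_guess_ptr_end: "zero_count T (guess_ptr_end k) = cell_level k (guess_node k)"
proof -
  have "Suc (guess_ptr k) \<le> Suc (max_ptr k)"
    using ptr_len_le by simp
  then have "zero_count T (head_pos k (guess_cell k) (guess_grows k) + Suc (guess_ptr k)) =
      stage_zeros k + Suc (guess_cell k) * cell_zeros k"
    by (rule zero_count_head[OF guess_cell_less])
  then show ?thesis
    using guess_head(2)[of k] guess_node_nodes(2)[of k] by (simp add: cell_level_def)
qed

lemma guess_0: "guess_node 0 = []" "\<not> guess_grows 0"
  using guess_node_nodes(1)[of 0] guess_head(3)[of 0]
  by (auto simp: nodes_0 fits_def split: if_splits)

lemma guess_parent_nodes: "0 < k \<Longrightarrow> guess_parent k \<in> nodes (k - 1)"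
  using guess_head(3)[of k] by (auto simp: guess_parent_def prev_node_def fits_def split: if_splits)

lemma guess_ptr_eq:
  "guess_ptr k =
    cell_level k (guess_node k) - (if k = 0 then 0 else cell_level (k - 1) (guess_parent k))"
  by (simp add: ptr_len_def guess_parent_def)

lemma counter_guess_ptr_end_less: "c (guess_ptr_end k) < cell_zeros k"
proof -
  have "c (guess_ptr_end k) + guess_ptr k \<le> cell_level k (guess_node k)"
    using guess_ptr_end_props(2)[of k] counter_le_zero_count[of "guess_pos k"]
      zero_count_guess_pos[of k]
    by simp
  moreover have "(if k = 0 then 0 else cell_level (k - 1) (guess_parent k)) \<le> stage_zeros k"
    using cell_level_le_stage_zeros_Suc[of "k - 1" "guess_parent k"] by (cases k) simp_all
  ultimately show ?thesis
    using guess_ptr_eq[of k] stage_zeros_less_cell_level[of k "guess_node k"]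
    by (simp add: cell_zeros_def)
qed

text \<open>Between the pointers of stages k and k + 1 the counter only grows, by the zeros read; the
  second pointer must not exceed the counter, which forces the cell of the node continued at stage
  k + 1 not to precede the cell of the node guessed at stage k.\<close>
lemma kb_le_guess_parent_Suc: "kb_le (guess_parent (Suc k)) (guess_node k)"
proof -
  let ?v = "guess_node k" and ?w = "guess_parent (Suc k)"
  have "guess_ptr_end k \<le> guess_pos (Suc k)"
    using guess_ptr_end_props(3)[of k] guess_pos_props[of "Suc k"] by simp
  then have "c (guess_pos (Suc k)) + cell_level k ?v =
      c (guess_ptr_end k) + cell_level (Suc k) (guess_node (Suc k))"
    using counter_no_decrement run_no_decrement_between[of k] zero_count_guess_ptr_end
      zero_count_guess_pos
    by metis
  moreover have "guess_ptr (Suc k) \<le> c (guess_pos (Suc k))"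
    using guess_ptr_end_props(2)[of "Suc k"] by simp
  moreover have "cell_level k ?w \<le> cell_level (Suc k) (guess_node (Suc k))"
    using cell_level_le_stage_zeros_Suc[of k ?w]
      stage_zeros_less_cell_level[of "Suc k" "guess_node (Suc k)"]
    by simp
  ultimately have "cell_level k ?v < cell_level k ?w + cell_zeros k"
    using guess_ptr_eq[of "Suc k"] counter_guess_ptr_end_less[of k] by simp
  then have "cell_index k ?v * cell_zeros k < Suc (cell_index k ?w) * cell_zeros k"
    by (simp add: cell_level_def)
  then have "cell_index k ?v \<le> cell_index k ?w"
    by (simp only: mult_less_cancel2) simp
  moreover have "?w \<in> nodes k"
    using guess_parent_nodes[of "Suc k"] by simp
  ultimately show ?thesis
    using kb_le_if_kb_code_le cell_index_le_iff guess_node_nodes(1) by blast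
qed

lemma kb_le_guess_node_Suc: "kb_le (guess_node (Suc k)) (guess_node k)"
proof (cases "guess_grows (Suc k)")
  case True
  then have "guess_node (Suc k) = guess_parent (Suc k) @ [last (guess_node (Suc k))]"
    using guess_head(3)[of "Suc k"] by (simp add: guess_parent_def prev_node_def fits_def)
  then show ?thesis
    using kb_le_trans[OF kb_le_snoc kb_le_guess_parent_Suc] by metis
next
  case False
  then show ?thesis
    using kb_le_guess_parent_Suc[of k] by (simp add: guess_parent_def prev_node_def)
qed

lemma guess_node_Suc_neq: "guess_grows (Suc k) \<Longrightarrow> guess_node (Suc k) \<noteq> guess_node k"
  using guess_head(3)[of "Suc k"] kb_le_guess_parent_Suc[of k] not_kb_le_butlast
  by (auto simp: guess_parent_def prev_node_def fits_def)

lemma run_final_state: "q i = 3 \<Longrightarrow> \<exists>k. i = Suc (guess_pos k) \<and> guess_grows k"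
proof -
  assume "q i = 3"
  then obtain l where l: "i = Suc l" "q l = 0" "tree_word T l = 3"
    using run_init run_enters_3 by (cases i) auto
  define k where "k = stage_of l"
  have "stage_start k \<le> l" "l \<le> stage_end k"
    using stage_of_bounds[of l] by (simp_all add: k_def)
  moreover have "l \<noteq> stage_end k"
    using l(3) tree_word_stage_end[of T k] by auto
  ultimately have "l = guess_pos k"
    using l \<open>q i = 3\<close> by (intro guess_pos_unique) auto
  with l show ?thesis
    by (auto simp: guess_grows_def)
qed

lemma infinite_guess_changes:
  assumes "infinite {i. q i \<in> final branch_automaton}"
  shows "infinite {k. guess_node (Suc k) \<noteq> guess_node k}"
proof
  assume fin: "finite {k. guess_node (Suc k) \<noteq> guess_node k}"
  have "{i. q i \<in> final branch_automaton} \<subseteq>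
      (\<lambda>k. Suc (guess_pos (Suc k))) ` {k. guess_node (Suc k) \<noteq> guess_node k}"
  proof
    fix i
    assume "i \<in> {i. q i \<in> final branch_automaton}"
    then obtain k where k: "i = Suc (guess_pos k)" "guess_grows k"
      using run_final_state by (auto simp: branch_automaton_def)
    then obtain m where "k = Suc m"
      using guess_0(2) by (cases k) auto
    with k show "i \<in> (\<lambda>k. Suc (guess_pos (Suc k))) ` {k. guess_node (Suc k) \<noteq> guess_node k}"
      using guess_node_Suc_neq by blast
  qed
  with assms show False
    using finite_subset[OF _ finite_imageI[OF fin]] by blast
qed

lemma accepting_run_branch:
  assumes "infinite {i. q i \<in> final branch_automaton}"
    and prefix_closed: "\<And>v d. v \<in> T \<Longrightarrow> take d v \<in> T"
  shows "\<exists>b. \<forall>d. map b [0..<d] \<in> T"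
proof -
  interpret kb_descending guess_node
    using kb_le_guess_node_Suc infinite_guess_changes[OF assms(1)] by unfold_locales
  obtain b where "\<forall>d. \<forall>\<^sub>F k in sequentially. take d (guess_node k) = map b [0..<d]"
    using limit_branch by blast
  then have "\<exists>k. take d (guess_node k) = map b [0..<d]" for d
    using eventually_happens'[OF sequentially_bot] by blast
  then have "map b [0..<d] \<in> T" for d
    using guess_head(4) prefix_closed by metis
  then show ?thesis
    by blast
qed

end

section \<open>Completeness\<close>

lemma tree_word_in_omega_lang_iff:
  assumes prefix_closed: "\<And>v d. v \<in> T \<Longrightarrow> take d v \<in> T"
  shows "tree_word T \<in> omega_lang branch_automaton \<longleftrightarrow> (\<exists>b. \<forall>d. map b [0..<d] \<in> T)"
proof
  assume "tree_word T \<in> omega_lang branch_automaton"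
  then obtain q c where "is_run branch_automaton (tree_word T) q c"
    and "infinite {i. q i \<in> final branch_automaton}"
    unfolding omega_lang_def by blast
  then show "\<exists>b. \<forall>d. map b [0..<d] \<in> T"
    using accepting_run_branch prefix_closed by blast
next
  assume "\<exists>b. \<forall>d. map b [0..<d] \<in> T"
  then show "tree_word T \<in> omega_lang branch_automaton"
    using tree_word_accepted by blast
qed

lemma tree_word_cong:
  assumes "\<And>v. length v \<le> stage_of n \<Longrightarrow> v \<in> T \<longleftrightarrow> v \<in> T'"
  shows "tree_word T n = tree_word T' n"
proof -
  let ?k = "stage_of n"
  have "cell_node ?k r \<in> T \<longleftrightarrow> cell_node ?k r \<in> T'" if "r \<in> cell_index ?k ` nodes ?k" for r
    using cell_node_props[OF that] assms by (simp add: nodes_def)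
  then have "cell_letter T ?k r q = cell_letter T' ?k r q" for r q
    by (auto simp: cell_letter_def half_letter_def)
  then show ?thesis
    by (simp add: tree_word_def Let_def)
qed

lemma continuous_map_tree_word_section_tree:
  "continuous_map (cantor_top Y) (cantor_top (alph branch_automaton))
     (\<lambda>y. tree_word (section_tree C y))"
proof (rule continuous_map_cantor_topI)
  fix y n
  show "tree_word (section_tree C y) n \<in> alph branch_automaton"
    using tree_word_range by (simp add: branch_automaton_def)
  have "tree_word (section_tree C y') n = tree_word (section_tree C y) n"
    if "y' \<in> cylinder Y (stage_of n) y" for y'
    using that by (intro tree_word_cong section_tree_cong) (auto simp: cylinder_def)
  then show "\<exists>m. \<forall>y'\<in>cylinder Y m y.
      tree_word (section_tree C y') n = tree_word (section_tree C y) n"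
    by blast
qed

lemma sigma11_complete_branch_automaton:
  "sigma11_complete (alph branch_automaton) (omega_lang branch_automaton)"
  unfolding sigma11_complete_def
proof (intro conjI allI impI)
  show "omega_lang branch_automaton \<subseteq> topspace (cantor_top (alph branch_automaton))"
    by (auto simp: omega_lang_def)
  fix Y E
  show "analytic_set Y E \<longleftrightarrow>
    (\<exists>f. continuous_map (cantor_top Y) (cantor_top (alph branch_automaton)) f \<and>
      E = {y \<in> topspace (cantor_top Y). f y \<in> omega_lang branch_automaton})"
  proof
    assume "analytic_set Y E"
    then obtain C where C: "closedin (prod_topology (cantor_top Y) baire_top) C"
      and E: "E = fst ` C"
      unfolding analytic_set_def by blast
    have "y \<in> fst ` C \<longleftrightarrow> tree_word (section_tree C y) \<in> omega_lang branch_automaton"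
      if "y \<in> topspace (cantor_top Y)" for y
      using closedin_fst_image_iff_branch[OF C that]
        tree_word_in_omega_lang_iff[OF section_tree_take]
      by simp
    moreover have "fst ` C \<subseteq> topspace (cantor_top Y)"
      using C unfolding closedin_cantor_baire_iff by auto
    ultimately have "E = {y \<in> topspace (cantor_top Y).
        tree_word (section_tree C y) \<in> omega_lang branch_automaton}"
      unfolding E by blast
    then show "\<exists>f. continuous_map (cantor_top Y) (cantor_top (alph branch_automaton)) f \<and>
        E = {y \<in> topspace (cantor_top Y). f y \<in> omega_lang branch_automaton}"
      using continuous_map_tree_word_section_tree by blast
  next
    assume "\<exists>f. continuous_map (cantor_top Y) (cantor_top (alph branch_automaton)) f \<and>
        E = {y \<in> topspace (cantor_top Y). f y \<in> omega_lang branch_automaton}"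
    then show "analytic_set Y E"
      using analytic_set_preimage analytic_set_omega_lang by blast
  qed
qed

theorem mainTheorem10:
  shows "\<exists>A. wf_bcba A \<and> sigma11_complete (alph A) (omega_lang A) \<and>
             \<not> borel_in (cantor_top (alph A)) (omega_lang A)"
  using wf_branch_automaton sigma11_complete_branch_automaton sigma11_complete_not_borel by blast

end
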